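(* There exists a fully polynomial-time approximation scheme (FPTAS) for PKP whose algorithm for accuracy $\varepsilon$ has running time $\mathcal{O}\!\left(\frac{n^4}{\varepsilon}\log(p_{\max})\right)$, where $p_{\max}=\max_{j\in N}|p_j|$.
   Context: The Product Knapsack Problem (PKP): an instance consists of items $j\in N=\{1,\dots,n\}$ with integer weights $w_j$ and integer profits $p_j$, and a positive integer capacity $C$; the task is to find $S\subseteq N$ with $\sum_{j\in S}w_j\le C$ maximizing $\prod_{j\in S}p_j$, where the empty set has objective value $0$. Let $z^*$ denote the optimal value. Throughout, instances are assumed to satisfy: (a) $w_j\le C$ for all $j$; (b) $p_j\neq 0$ for all $j$; (c) for each $j$ with $p_j<0$ there is $j'\neq j$ with $p_{j'}<0$ and $w_j+w_{j'}\le C$; (d) $w_j\ge 0$ for all $j$; (e) $p_j<0$ whenever $w_j=0$. For $0<\alpha\le 1$, an $\alpha$-approximation algorithm computes in polynomial time a feasible $S$ with $\prod_{j\in S}p_j\ge \alpha z^*$. An FPTAS is a family $(A_\varepsilon)_{\varepsilon>0}$ where each $A_\varepsilon$ is a $(1-\varepsilon)$-approximation algorithm with running time polynomial in the input size and in $1/\varepsilon$. *)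

theory Defs
  imports Complex_Main
begin

definition feasible :: "int list \<Rightarrow> int \<Rightarrow> nat set \<Rightarrow> bool" where
  "feasible ws C S \<longleftrightarrow> S \<subseteq> {..<length ws} \<and> (\<Sum>j\<in>S. ws ! j) \<le> C"

definition obj :: "int list \<Rightarrow> nat set \<Rightarrow> real" where
  "obj ps S = (if S = {} then 0 else (\<Prod>j\<in>S. real_of_int (ps ! j)))"

definition opt :: "int list \<Rightarrow> int list \<Rightarrow> int \<Rightarrow> real" where
  "opt ws ps C = Max {obj ps S | S. feasible ws C S}"

definition pmax :: "int list \<Rightarrow> int" where
  "pmax ps = Max (insert 1 (abs ` set ps))"

definition pkp_instance :: "int list \<Rightarrow> int list \<Rightarrow> int \<Rightarrow> bool" where
  "pkp_instance ws ps C \<longleftrightarrow>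
     length ws = length ps \<and> length ws \<ge> 1 \<and> C > 0 \<and>
     (\<forall>j<length ws. ws ! j \<le> C) \<and>                                  \<comment> \<open>(a)\<close>
     (\<forall>j<length ws. ps ! j \<noteq> 0) \<and>                                 \<comment> \<open>(b)\<close>
     (\<forall>j<length ws. ps ! j < 0 \<longrightarrow>
        (\<exists>j'<length ws. j' \<noteq> j \<and> ps ! j' < 0 \<and> ws ! j + ws ! j' \<le> C)) \<and> \<comment> \<open>(c)\<close>
     (\<forall>j<length ws. ws ! j \<ge> 0) \<and>                                  \<comment> \<open>(d)\<close>
     (\<forall>j<length ws. ws ! j = 0 \<longrightarrow> ps ! j < 0)                        \<comment> \<open>(e)\<close>"

text \<open>Memory is a map from integer addresses to integers; instructions name addresses.
  Every executed instruction costs one time unit.\<close>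

datatype instr =
    SetC int int
  | Add int int int
  | Sub int int int
  | Mul int int int
  | Div int int int         \<comment> \<open>m[a] := m[b] div m[d]  (floor division, x div 0 = 0)\<close>
  | LoadI int int
  | StoreI int int
  | JPos int nat
  | Jmp nat
  | Halt

type_synonym state = "nat \<times> (int \<Rightarrow> int)"

fun exec :: "instr \<Rightarrow> state \<Rightarrow> state" where
  "exec (SetC a c) (pc, m) = (Suc pc, m(a := c))"
| "exec (Add a b d) (pc, m) = (Suc pc, m(a := m b + m d))"
| "exec (Sub a b d) (pc, m) = (Suc pc, m(a := m b - m d))"
| "exec (Mul a b d) (pc, m) = (Suc pc, m(a := m b * m d))"
| "exec (Div a b d) (pc, m) = (Suc pc, m(a := m b div m d))"
| "exec (LoadI a b) (pc, m) = (Suc pc, m(a := m (m b)))"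
| "exec (StoreI a b) (pc, m) = (Suc pc, m(m a := m b))"
| "exec (JPos a l) (pc, m) = (if m a > 0 then l else Suc pc, m)"
| "exec (Jmp l) (pc, m) = (l, m)"
| "exec Halt (pc, m) = (pc, m)"

definition halted :: "instr list \<Rightarrow> state \<Rightarrow> bool" where
  "halted P s \<longleftrightarrow> fst s \<ge> length P \<or> P ! fst s = Halt"

definition step :: "instr list \<Rightarrow> state \<Rightarrow> state" where
  "step P s = (if halted P s then s else exec (P ! fst s) s)"

definition run :: "instr list \<Rightarrow> nat \<Rightarrow> state \<Rightarrow> state" where
  "run P t s = (step P ^^ t) s"

text \<open>Input encoding: m[0] = n, m[1] = C, m[2+2j] = w_j, m[3+2j] = p_j (j < n), 0 elsewhere;
  execution starts at instruction 0.\<close>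

definition init :: "int list \<Rightarrow> int list \<Rightarrow> int \<Rightarrow> state" where
  "init ws ps C = (0, \<lambda>a. if a = 0 then int (length ws) else if a = 1 then C
      else if 2 \<le> a \<and> a < 2 + 2 * int (length ws) then
        (if even a then ws ! nat ((a - 2) div 2) else ps ! nat ((a - 2) div 2))
      else 0)"

definition ram_output :: "nat \<Rightarrow> state \<Rightarrow> nat set" where
  "ram_output n s = {j. j < n \<and> snd s (int j) \<noteq> 0}"

text \<open>Word-size restriction (trans-dichotomous word RAM): during the first t steps all
  memory contents are bounded in absolute value by a fixed polynomial in the numbers
  occurring in the input and 1/eps.\<close>

definition word_bounded :: "nat \<Rightarrow> real \<Rightarrow> int list \<Rightarrow> int list \<Rightarrow> int \<Rightarrow> instr list \<Rightarrow> nat \<Rightarrow> bool" where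
  "word_bounded K eps ws ps C P t \<longleftrightarrow>
     (\<forall>t'\<le>t. \<forall>a. \<bar>snd (run P t' (init ws ps C)) a\<bar>
        \<le> (2 + int (length ws) + C + pmax ps + \<lceil>1 / eps\<rceil>) ^ K)"

definition approx_alg_within ::
  "nat \<Rightarrow> real \<Rightarrow> (int list \<Rightarrow> int list \<Rightarrow> int \<Rightarrow> real) \<Rightarrow> instr list \<Rightarrow> bool" where
  "approx_alg_within K eps T P \<longleftrightarrow>
     (\<forall>ws ps C. pkp_instance ws ps C \<longrightarrow>
        (\<exists>t. real t \<le> T ws ps C \<and>
             halted P (run P t (init ws ps C)) \<and>
             word_bounded K eps ws ps C P t \<and>
             (let S = ram_output (length ws) (run P t (init ws ps C)) in
                feasible ws C S \<and> obj ps S \<ge> (1 - eps) * opt ws ps C)))"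

end

theory Submission
  imports Defs
begin

text \<open>Every profit is rounded to a power of the base b = 1 + 1/mu, mu = 3nM: its level v is
  computed with integer operations only and satisfies (1 - 1/mu) b^v \<le> |p| \<le> b^(v+1).
  Item j gets the key (n + 1)(v_j + 1) + [p_j < 0]. As at most n items are chosen, the key of a
  set encodes its level sum and, as the residue modulo n + 1, its number of negative items.
  A dynamic program over the keys computes the least weight of a set with each key. The
  largest key of a set fitting into the knapsack with an even residue belongs to a set of
  positive product whose level sum is at least that of an optimal set (the optimum is positive
  by condition (c)); since levels determine |p| up to the factor (1 - 1/mu)/b \<ge> 1 - 2/mu,
  that set is within the factor (1 - 2/mu)^n \<ge> 1 - 1/M of the optimum. Keys are at most
  O(n^3 M log pmax), so the n + 1 table rows are filled in O(n^4 M log pmax) steps of the RAM,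
  and every memory cell stays below (2 + n + C + pmax + M)^20. The scheme runs the program
  with M = ceiling(1/eps).\<close>

definition mem_bounded :: "int \<Rightarrow> (int \<Rightarrow> int) \<Rightarrow> bool" where
  "mem_bounded B m \<longleftrightarrow> (\<forall>a. \<bar>m a\<bar> \<le> B)"

definition reaches_within :: "instr list \<Rightarrow> int \<Rightarrow> state \<Rightarrow> nat \<Rightarrow> state \<Rightarrow> bool" where
  "reaches_within P B s T s' \<longleftrightarrow>
     (\<exists>t\<le>T. run P t s = s' \<and> (\<forall>t'\<le>t. mem_bounded B (snd (run P t' s))))"

lemma run_0 [simp]: "run P 0 s = s"
  by (simp add: run_def)

lemma run_Suc: "run P (Suc t) s = run P t (step P s)"
  unfolding run_def by (metis comp_apply funpow_Suc_right)

lemma run_add: "run P (a + b) s = run P b (run P a s)"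
  unfolding run_def by (metis add.commute comp_apply funpow_add)

lemma reaches_within_refl: "mem_bounded B (snd s) \<Longrightarrow> reaches_within P B s T s"
  unfolding reaches_within_def by (rule exI[of _ 0]) auto

lemma reaches_within_stepI:
  assumes "mem_bounded B (snd s)" and "reaches_within P B (step P s) T s'"
  shows "reaches_within P B s (Suc T) s'"
proof -
  obtain t where t: "t \<le> T" "run P t (step P s) = s'"
    "\<forall>t'\<le>t. mem_bounded B (snd (run P t' (step P s)))"
    using assms(2) unfolding reaches_within_def by blast
  have "mem_bounded B (snd (run P t' s))" if "t' \<le> Suc t" for t'
    using that assms(1) t(3) by (cases t') (auto simp: run_Suc)
  then show ?thesis
    unfolding reaches_within_def using t by (intro exI[of _ "Suc t"]) (auto simp: run_Suc)
qed

lemma reaches_within_trans: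
  assumes "reaches_within P B s T1 s1" and "reaches_within P B s1 T2 s2"
  shows "reaches_within P B s (T1 + T2) s2"
proof -
  obtain t1 where a: "t1 \<le> T1" "run P t1 s = s1" "\<forall>t'\<le>t1. mem_bounded B (snd (run P t' s))"
    using assms(1) unfolding reaches_within_def by blast
  obtain t2 where b: "t2 \<le> T2" "run P t2 s1 = s2" "\<forall>t'\<le>t2. mem_bounded B (snd (run P t' s1))"
    using assms(2) unfolding reaches_within_def by blast
  have "mem_bounded B (snd (run P t' s))" if "t' \<le> t1 + t2" for t'
  proof (cases "t' \<le> t1")
    case False
    then have "t' = t1 + (t' - t1)" "t' - t1 \<le> t2" using that by auto
    then show ?thesis using a b by (metis run_add)
  qed (use a in simp)
  then show ?thesis
    unfolding reaches_within_def using a b by (intro exI[of _ "t1 + t2"]) (auto simp: run_add)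
qed

lemma reaches_within_mono: "reaches_within P B s T s' \<Longrightarrow> T \<le> T' \<Longrightarrow> reaches_within P B s T' s'"
  unfolding reaches_within_def using le_trans by blast

definition runs_to ::
  "instr list \<Rightarrow> int \<Rightarrow> nat \<Rightarrow> (int \<Rightarrow> int) \<Rightarrow> nat \<Rightarrow> nat \<Rightarrow> ((int \<Rightarrow> int) \<Rightarrow> bool) \<Rightarrow> bool" where
  "runs_to P B pc m T pc' Q \<longleftrightarrow> (\<exists>m'. reaches_within P B (pc, m) T (pc', m') \<and> Q m')"

lemma runs_to_step:
  assumes "0 < T" "pc < length P" "P ! pc \<noteq> Halt" "mem_bounded B m"
    "runs_to P B (fst (exec (P ! pc) (pc, m))) (snd (exec (P ! pc) (pc, m))) (T - 1) pc' Q"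
  shows "runs_to P B pc m T pc' Q"
proof -
  obtain m' where r: "reaches_within P B (exec (P ! pc) (pc, m)) (T - 1) (pc', m')" "Q m'"
    using assms(5) unfolding runs_to_def by auto
  have "step P (pc, m) = exec (P ! pc) (pc, m)"
    using assms(2,3) by (simp add: step_def halted_def)
  then have "reaches_within P B (pc, m) (Suc (T - 1)) (pc', m')"
    using reaches_within_stepI[of B "(pc, m)" P] r assms(4) by simp
  then show ?thesis unfolding runs_to_def using r assms(1) by auto
qed

lemma runs_to_done: "mem_bounded B m \<Longrightarrow> Q m \<Longrightarrow> runs_to P B pc m T pc Q"
  unfolding runs_to_def using reaches_within_refl[of B "(pc, m)"] by auto

lemma runs_to_trans:
  "runs_to P B pc m T1 pc1 Q1 \<Longrightarrow> (\<And>m1. Q1 m1 \<Longrightarrow> runs_to P B pc1 m1 T2 pc2 Q2)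
    \<Longrightarrow> runs_to P B pc m (T1 + T2) pc2 Q2"
  unfolding runs_to_def using reaches_within_trans by blast

lemma runs_to_mono:
  "runs_to P B pc m T pc' Q \<Longrightarrow> T \<le> T' \<Longrightarrow> (\<And>m'. Q m' \<Longrightarrow> Q' m') \<Longrightarrow> runs_to P B pc m T' pc' Q'"
  unfolding runs_to_def using reaches_within_mono by blast

lemma runs_to_loop:
  assumes body: "\<And>k m. k < N \<Longrightarrow> I k m \<Longrightarrow> runs_to P B h m (c k) h (I (Suc k))"
    and "I k0 m" "k0 \<le> N" "\<And>m. I N m \<Longrightarrow> mem_bounded B m"
  shows "runs_to P B h m (\<Sum>k\<in>{k0..<N}. c k) h (I N)"
  using assms(2-)
proof (induction "N - k0" arbitrary: k0 m)
  case 0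
  then show ?case using runs_to_done by simp
next
  case (Suc x)
  then have k0: "k0 < N" by simp
  have "(\<Sum>k\<in>{k0..<N}. c k) = c k0 + (\<Sum>k\<in>{Suc k0..<N}. c k)"
    using k0 by (simp add: sum.atLeast_Suc_lessThan)
  moreover have "runs_to P B h m (c k0 + (\<Sum>k\<in>{Suc k0..<N}. c k)) h (I N)"
  proof (rule runs_to_trans[OF body[OF k0 Suc.prems(1)]])
    fix m1 assume "I (Suc k0) m1"
    then show "runs_to P B h m1 (\<Sum>k\<in>{Suc k0..<N}. c k) h (I N)"
      using Suc.hyps(1)[of "Suc k0" m1] Suc.hyps(2) Suc.prems(3) k0 by simp
  qed
  ultimately show ?case by simp
qed

text \<open>The bound of an updated cell is kept behind this constant so that the simplifier
  discharges it from a stated fact instead of rewriting the absolute value.\<close>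

definition fits :: "int \<Rightarrow> int \<Rightarrow> bool" where
  "fits B x \<longleftrightarrow> \<bar>x\<bar> \<le> B"

lemma mem_bounded_upd: "mem_bounded B m \<Longrightarrow> mem_bounded B (m(a := x)) = fits B x"
  unfolding mem_bounded_def fits_def by (metis fun_upd_same fun_upd_apply)

lemma exec_plus_one:
  "exec (SetC a c) (pc, m) = (pc + 1, m(a := c))"
  "exec (Add a b d) (pc, m) = (pc + 1, m(a := m b + m d))"
  "exec (Sub a b d) (pc, m) = (pc + 1, m(a := m b - m d))"
  "exec (Mul a b d) (pc, m) = (pc + 1, m(a := m b * m d))"
  "exec (Div a b d) (pc, m) = (pc + 1, m(a := m b div m d))"
  "exec (LoadI a b) (pc, m) = (pc + 1, m(a := m (m b)))"
  "exec (StoreI a b) (pc, m) = (pc + 1, m(m a := m b))"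
  "exec (JPos a l) (pc, m) = (if m a > 0 then l else pc + 1, m)"
  "exec (Jmp l) (pc, m) = (l, m)"
  by auto

text \<open>The algorithm as a RAM program, parametrised by the accuracy M (one aims at the
  factor 1 - 1/M). Memory layout for an instance with n items: the input occupies addresses
  0 to 2n+1 and the output bits are finally written to addresses 0 to n-1; the item keys are
  stored from address 2n+2 on and the dynamic-programming table (n+1 rows of width
  key_max+1) from address 3n+2 on; negative addresses are registers. The phases occupy
  instructions 0--14 (constants), 15--43 (levels and keys of the items), 44--52 (row 0 of
  the table), 53--86 (rows 1 to n), 87--102 (search for the best admissible key) and
  103--120 (backtracking).\<close>

definition prog :: "int \<Rightarrow> instr list" where
  "prog M = [
    SetC (-1) 1,
    SetC (-15) 2,
    SetC (-16) 3,
    Add (-2) 0 (-30),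
    Add (-3) 1 (-1),
    SetC (-12) M,
    Mul (-4) (-2) (-12),
    Add (-13) (-4) (-4),
    Add (-4) (-13) (-4),
    Mul (-5) (-4) (-4),
    Add (-6) (-4) (-1),
    Add (-7) (-2) (-1),
    Add (-10) (-2) (-2),
    Add (-10) (-10) (-15),
    Add (-11) (-10) (-2),
    Sub (-12) (-2) (-8),
    JPos (-12) 18,
    Jmp 44,
    Add (-13) (-8) (-8),
    Add (-13) (-13) (-16),
    LoadI (-17) (-13),
    JPos (-17) 25,
    SetC (-19) 1,
    Sub (-17) (-30) (-17),
    Jmp 26,
    SetC (-19) 0,
    Mul (-20) (-17) (-5),
    SetC (-21) 0,
    Add (-22) (-5) (-30),
    Mul (-23) (-22) (-6),
    Div (-23) (-23) (-4),
    Sub (-24) (-23) (-20),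
    JPos (-24) 36,
    Add (-22) (-23) (-30),
    Add (-21) (-21) (-1),
    Jmp 29,
    Add (-21) (-21) (-1),
    Mul (-21) (-21) (-7),
    Add (-21) (-21) (-19),
    Add (-24) (-10) (-8),
    StoreI (-24) (-21),
    Add (-9) (-9) (-21),
    Add (-8) (-8) (-1),
    Jmp 15,
    Add (-9) (-9) (-1),
    SetC (-8) 1,
    Sub (-12) (-9) (-8),
    JPos (-12) 49,
    Jmp 53,
    Add (-13) (-11) (-8),
    StoreI (-13) (-3),
    Add (-8) (-8) (-1),
    Jmp 46,
    SetC (-8) 1,
    Add (-25) (-11) (-30),
    Sub (-12) (-7) (-8),
    JPos (-12) 58,
    Jmp 87,
    Add (-13) (-10) (-8),
    Sub (-13) (-13) (-1),
    LoadI (-26) (-13),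
    Add (-13) (-8) (-8),
    LoadI (-27) (-13),
    SetC (-28) 0,
    Sub (-12) (-9) (-28),
    JPos (-12) 69,
    Add (-25) (-25) (-9),
    Add (-8) (-8) (-1),
    Jmp 55,
    Add (-13) (-25) (-28),
    LoadI (-14) (-13),
    Sub (-12) (-28) (-26),
    Add (-12) (-12) (-1),
    JPos (-12) 75,
    Jmp 82,
    Sub (-13) (-13) (-26),
    LoadI (-29) (-13),
    Add (-29) (-29) (-27),
    Sub (-12) (-14) (-29),
    JPos (-12) 81,
    Jmp 82,
    Add (-14) (-29) (-30),
    Add (-13) (-25) (-9),
    Add (-13) (-13) (-28),
    StoreI (-13) (-14),
    Add (-28) (-28) (-1),
    Jmp 64,
    Sub (-28) (-9) (-1),
    Add (-13) (-25) (-28),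
    LoadI (-14) (-13),
    Sub (-12) (-3) (-14),
    JPos (-12) 93,
    Jmp 101,
    Div (-12) (-28) (-7),
    Mul (-12) (-12) (-7),
    Sub (-12) (-28) (-12),
    Div (-13) (-12) (-15),
    Mul (-13) (-13) (-15),
    Sub (-13) (-12) (-13),
    JPos (-13) 101,
    Jmp 103,
    Sub (-28) (-28) (-1),
    Jmp 88,
    Add (-8) (-2) (-30),
    JPos (-8) 106,
    Jmp 121,
    Add (-13) (-25) (-28),
    LoadI (-14) (-13),
    Sub (-25) (-25) (-9),
    Add (-13) (-25) (-28),
    LoadI (-29) (-13),
    Sub (-12) (-29) (-14),
    Sub (-8) (-8) (-1),
    JPos (-12) 116,
    StoreI (-8) (-30),
    Jmp 104,
    StoreI (-8) (-1),
    Add (-13) (-10) (-8),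
    LoadI (-13) (-13),
    Sub (-28) (-28) (-13),
    Jmp 104,
    Halt]"

lemma length_prog [simp]: "length (prog M) = 122"
  by (simp add: prog_def)

lemma prog_nth:
  "prog M ! 0 = SetC (-1) 1"
  "prog M ! 1 = SetC (-15) 2"
  "prog M ! Suc 0 = SetC (-15) 2"
  "prog M ! 2 = SetC (-16) 3"
  "prog M ! 3 = Add (-2) 0 (-30)"
  "prog M ! 4 = Add (-3) 1 (-1)"
  "prog M ! 5 = SetC (-12) M"
  "prog M ! 6 = Mul (-4) (-2) (-12)"
  "prog M ! 7 = Add (-13) (-4) (-4)"
  "prog M ! 8 = Add (-4) (-13) (-4)"
  "prog M ! 9 = Mul (-5) (-4) (-4)"
  "prog M ! 10 = Add (-6) (-4) (-1)"
  "prog M ! 11 = Add (-7) (-2) (-1)"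
  "prog M ! 12 = Add (-10) (-2) (-2)"
  "prog M ! 13 = Add (-10) (-10) (-15)"
  "prog M ! 14 = Add (-11) (-10) (-2)"
  "prog M ! 15 = Sub (-12) (-2) (-8)"
  "prog M ! 16 = JPos (-12) 18"
  "prog M ! 17 = Jmp 44"
  "prog M ! 18 = Add (-13) (-8) (-8)"
  "prog M ! 19 = Add (-13) (-13) (-16)"
  "prog M ! 20 = LoadI (-17) (-13)"
  "prog M ! 21 = JPos (-17) 25"
  "prog M ! 22 = SetC (-19) 1"
  "prog M ! 23 = Sub (-17) (-30) (-17)"
  "prog M ! 24 = Jmp 26"
  "prog M ! 25 = SetC (-19) 0"
  "prog M ! 26 = Mul (-20) (-17) (-5)"
  "prog M ! 27 = SetC (-21) 0"
  "prog M ! 28 = Add (-22) (-5) (-30)"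
  "prog M ! 29 = Mul (-23) (-22) (-6)"
  "prog M ! 30 = Div (-23) (-23) (-4)"
  "prog M ! 31 = Sub (-24) (-23) (-20)"
  "prog M ! 32 = JPos (-24) 36"
  "prog M ! 33 = Add (-22) (-23) (-30)"
  "prog M ! 34 = Add (-21) (-21) (-1)"
  "prog M ! 35 = Jmp 29"
  "prog M ! 36 = Add (-21) (-21) (-1)"
  "prog M ! 37 = Mul (-21) (-21) (-7)"
  "prog M ! 38 = Add (-21) (-21) (-19)"
  "prog M ! 39 = Add (-24) (-10) (-8)"
  "prog M ! 40 = StoreI (-24) (-21)"
  "prog M ! 41 = Add (-9) (-9) (-21)"
  "prog M ! 42 = Add (-8) (-8) (-1)"
  "prog M ! 43 = Jmp 15"
  "prog M ! 44 = Add (-9) (-9) (-1)"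
  "prog M ! 45 = SetC (-8) 1"
  "prog M ! 46 = Sub (-12) (-9) (-8)"
  "prog M ! 47 = JPos (-12) 49"
  "prog M ! 48 = Jmp 53"
  "prog M ! 49 = Add (-13) (-11) (-8)"
  "prog M ! 50 = StoreI (-13) (-3)"
  "prog M ! 51 = Add (-8) (-8) (-1)"
  "prog M ! 52 = Jmp 46"
  "prog M ! 53 = SetC (-8) 1"
  "prog M ! 54 = Add (-25) (-11) (-30)"
  "prog M ! 55 = Sub (-12) (-7) (-8)"
  "prog M ! 56 = JPos (-12) 58"
  "prog M ! 57 = Jmp 87"
  "prog M ! 58 = Add (-13) (-10) (-8)"
  "prog M ! 59 = Sub (-13) (-13) (-1)"
  "prog M ! 60 = LoadI (-26) (-13)"
  "prog M ! 61 = Add (-13) (-8) (-8)"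
  "prog M ! 62 = LoadI (-27) (-13)"
  "prog M ! 63 = SetC (-28) 0"
  "prog M ! 64 = Sub (-12) (-9) (-28)"
  "prog M ! 65 = JPos (-12) 69"
  "prog M ! 66 = Add (-25) (-25) (-9)"
  "prog M ! 67 = Add (-8) (-8) (-1)"
  "prog M ! 68 = Jmp 55"
  "prog M ! 69 = Add (-13) (-25) (-28)"
  "prog M ! 70 = LoadI (-14) (-13)"
  "prog M ! 71 = Sub (-12) (-28) (-26)"
  "prog M ! 72 = Add (-12) (-12) (-1)"
  "prog M ! 73 = JPos (-12) 75"
  "prog M ! 74 = Jmp 82"
  "prog M ! 75 = Sub (-13) (-13) (-26)"
  "prog M ! 76 = LoadI (-29) (-13)"
  "prog M ! 77 = Add (-29) (-29) (-27)"
  "prog M ! 78 = Sub (-12) (-14) (-29)"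
  "prog M ! 79 = JPos (-12) 81"
  "prog M ! 80 = Jmp 82"
  "prog M ! 81 = Add (-14) (-29) (-30)"
  "prog M ! 82 = Add (-13) (-25) (-9)"
  "prog M ! 83 = Add (-13) (-13) (-28)"
  "prog M ! 84 = StoreI (-13) (-14)"
  "prog M ! 85 = Add (-28) (-28) (-1)"
  "prog M ! 86 = Jmp 64"
  "prog M ! 87 = Sub (-28) (-9) (-1)"
  "prog M ! 88 = Add (-13) (-25) (-28)"
  "prog M ! 89 = LoadI (-14) (-13)"
  "prog M ! 90 = Sub (-12) (-3) (-14)"
  "prog M ! 91 = JPos (-12) 93"
  "prog M ! 92 = Jmp 101"
  "prog M ! 93 = Div (-12) (-28) (-7)"
  "prog M ! 94 = Mul (-12) (-12) (-7)"
  "prog M ! 95 = Sub (-12) (-28) (-12)"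
  "prog M ! 96 = Div (-13) (-12) (-15)"
  "prog M ! 97 = Mul (-13) (-13) (-15)"
  "prog M ! 98 = Sub (-13) (-12) (-13)"
  "prog M ! 99 = JPos (-13) 101"
  "prog M ! 100 = Jmp 103"
  "prog M ! 101 = Sub (-28) (-28) (-1)"
  "prog M ! 102 = Jmp 88"
  "prog M ! 103 = Add (-8) (-2) (-30)"
  "prog M ! 104 = JPos (-8) 106"
  "prog M ! 105 = Jmp 121"
  "prog M ! 106 = Add (-13) (-25) (-28)"
  "prog M ! 107 = LoadI (-14) (-13)"
  "prog M ! 108 = Sub (-25) (-25) (-9)"
  "prog M ! 109 = Add (-13) (-25) (-28)"
  "prog M ! 110 = LoadI (-29) (-13)"
  "prog M ! 111 = Sub (-12) (-29) (-14)"
  "prog M ! 112 = Sub (-8) (-8) (-1)"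
  "prog M ! 113 = JPos (-12) 116"
  "prog M ! 114 = StoreI (-8) (-30)"
  "prog M ! 115 = Jmp 104"
  "prog M ! 116 = StoreI (-8) (-1)"
  "prog M ! 117 = Add (-13) (-10) (-8)"
  "prog M ! 118 = LoadI (-13) (-13)"
  "prog M ! 119 = Sub (-28) (-28) (-13)"
  "prog M ! 120 = Jmp 104"
  "prog M ! 121 = Halt"
  by (simp_all add: prog_def)

lemmas prog_exec_simps = prog_nth exec_plus_one mem_bounded_upd

lemmas pc_numeral_simps = One_nat_def[symmetric] Suc_1 Suc_numeral add_num_simps

text \<open>Rounding to powers of base = 1 + 1/mu with integer operations only: grid k is an
  integer approximation of RR * base ^ k.\<close>

locale int_rounding =
  fixes mu :: int
  assumes mu_ge3: "3 \<le> mu"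
begin

definition "RR = mu * mu"

fun grid :: "nat \<Rightarrow> int" where
  "grid 0 = RR"
| "grid (Suc k) = grid k * (mu + 1) div mu"

definition level :: "int \<Rightarrow> nat" where
  "level p = (LEAST k. \<bar>p\<bar> * RR < grid (Suc k))"

definition "base = 1 + 1 / real_of_int mu"

lemma RR_pos: "0 < RR"
  using mu_ge3 by (simp add: RR_def)

lemma grid_Suc_eq: "grid (Suc k) = grid k + grid k div mu"
proof -
  have "grid k * (mu + 1) = grid k + grid k * mu" by (simp add: algebra_simps)
  then show ?thesis using mu_ge3 by simp
qed

lemma grid_ge: "RR + int k * mu \<le> grid k"
proof (induction k)
  case (Suc k)
  have "RR \<le> grid k" using Suc mu_ge3 by (smt (verit) mult_nonneg_nonneg of_nat_0_le_iff)
  then have "RR div mu \<le> grid k div mu" by (rule zdiv_mono1) (use mu_ge3 in auto)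
  moreover have "RR div mu = mu" unfolding RR_def using mu_ge3 by simp
  ultimately show ?case using Suc grid_Suc_eq[of k] by (simp add: algebra_simps)
qed simp

lemma grid_pos: "0 < grid k"
  using grid_ge[of k] RR_pos mu_ge3 by (smt (verit) mult_nonneg_nonneg of_nat_0_le_iff)

lemma grid_le_Suc: "grid k \<le> grid (Suc k)"
  using grid_Suc_eq[of k] grid_pos[of k] mu_ge3 by (simp add: pos_imp_zdiv_nonneg_iff)

lemma grid_mono: "k \<le> k' \<Longrightarrow> grid k \<le> grid k'"
  by (induction k' rule: dec_induct) (auto intro: order_trans grid_le_Suc simp del: grid.simps)

lemma grid_Suc_le_double: "grid (Suc k) \<le> 2 * grid k"
proof -
  have "grid k div mu \<le> grid k div 1" using grid_pos[of k] mu_ge3 by (intro zdiv_mono2) auto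
  then show ?thesis using grid_Suc_eq[of k] by simp
qed

lemma level_ex: "\<exists>k. \<bar>p\<bar> * RR < grid (Suc k)"
proof -
  define k where "k = nat (\<bar>p\<bar> * mu)"
  have k: "int k = \<bar>p\<bar> * mu" unfolding k_def using mu_ge3 by simp
  have "\<bar>p\<bar> * RR = \<bar>p\<bar> * mu * mu" by (simp add: RR_def)
  also have "\<dots> < RR + int (Suc k) * mu" using k mu_ge3 RR_pos by (simp add: algebra_simps)
  also have "\<dots> \<le> grid (Suc k)" by (rule grid_ge)
  finally show ?thesis by blast
qed

lemma grid_Suc_level_gt: "\<bar>p\<bar> * RR < grid (Suc (level p))"
  unfolding level_def by (rule LeastI_ex[OF level_ex])

lemma grid_Suc_le_if_less_level: "k < level p \<Longrightarrow> grid (Suc k) \<le> \<bar>p\<bar> * RR"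
  unfolding level_def using not_less_Least by (metis not_less)

lemma grid_level_le:
  assumes "p \<noteq> 0"
  shows "grid (level p) \<le> \<bar>p\<bar> * RR"
proof (cases "level p")
  case 0
  then show ?thesis using assms RR_pos by simp
next
  case (Suc k)
  then show ?thesis using grid_Suc_le_if_less_level[of k p] by simp
qed

lemma level_le:
  assumes "p \<noteq> 0"
  shows "int (level p) \<le> \<bar>p\<bar> * mu"
proof -
  have "RR + int (level p) * mu \<le> \<bar>p\<bar> * RR"
    using grid_ge[of "level p"] grid_level_le[OF assms] by linarith
  then have "int (level p) * mu \<le> (\<bar>p\<bar> - 1) * mu * mu" by (simp add: RR_def algebra_simps)
  then have "int (level p) \<le> (\<bar>p\<bar> - 1) * mu" using mu_ge3 by (simp add: mult.commute)
  then show ?thesis using mu_ge3 by (simp add: algebra_simps)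
qed

lemma base_gt1: "1 < base"
  using mu_ge3 by (simp add: base_def)

lemma grid_le_pow: "real_of_int (grid k) \<le> real_of_int RR * base ^ k"
proof (induction k)
  case (Suc k)
  have "real_of_int (grid (Suc k)) \<le> real_of_int (grid k * (mu + 1)) / real_of_int mu"
    by (simp only: grid.simps) (rule real_of_int_div4)
  also have "\<dots> = real_of_int (grid k) * base" using mu_ge3 by (simp add: base_def field_simps)
  also have "\<dots> \<le> real_of_int RR * base ^ k * base" using Suc base_gt1 by (simp add: mult_right_mono)
  finally show ?case by (simp add: algebra_simps)
qed simp

text \<open>The rounding error of each division is below 1, so the grid loses at most mu
  against the exact geometric sequence.\<close>

lemma grid_ge_pow:
  "(real_of_int RR - real_of_int mu) * base ^ k + real_of_int mu \<le> real_of_int (grid k)"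
proof (induction k)
  case (Suc k)
  have m0: "0 < real_of_int mu" using mu_ge3 by simp
  let ?x = "grid k * (mu + 1)"
  have "?x < (?x div mu + 1) * mu"
  proof -
    have "?x div mu * mu + ?x mod mu = ?x" "?x mod mu < mu" using mu_ge3 by simp_all
    moreover have "(?x div mu + 1) * mu = ?x div mu * mu + mu" by (simp add: distrib_right)
    ultimately show ?thesis by linarith
  qed
  then have "real_of_int ?x < real_of_int ((?x div mu + 1) * mu)" by linarith
  then have "real_of_int ?x / real_of_int mu < real_of_int (?x div mu) + 1"
    using m0 by (simp add: divide_less_eq)
  then have "real_of_int ?x / real_of_int mu - 1 \<le> real_of_int (?x div mu)"
    by linarith
  then have "real_of_int (grid k) * base - 1 \<le> real_of_int (grid (Suc k))"
    using mu_ge3 by (simp add: base_def field_simps)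
  moreover have "((real_of_int RR - real_of_int mu) * base ^ k + real_of_int mu) * base
      \<le> real_of_int (grid k) * base"
    using Suc base_gt1 by (simp add: mult_right_mono)
  moreover have "((real_of_int RR - real_of_int mu) * base ^ k + real_of_int mu) * base - 1
      = (real_of_int RR - real_of_int mu) * base ^ Suc k + real_of_int mu"
    using m0 by (simp add: base_def field_simps)
  ultimately show ?case by linarith
qed simp

lemma base_pow_level_le_abs:
  assumes "p \<noteq> 0" shows "(1 - 1 / real_of_int mu) * base ^ level p \<le> real_of_int \<bar>p\<bar>"
proof -
  have m0: "0 < real_of_int mu" using mu_ge3 by simp
  have "(real_of_int RR - real_of_int mu) * base ^ level p \<le> real_of_int (grid (level p))"
    using grid_ge_pow[of "level p"] m0 by linarith
  also have "\<dots> \<le> real_of_int \<bar>p\<bar> * real_of_int RR"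
    using grid_level_le[OF assms] by (metis of_int_le_iff of_int_mult)
  finally have "(real_of_int RR - real_of_int mu) * base ^ level p \<le> real_of_int \<bar>p\<bar> * real_of_int RR" .
  moreover have "(1 - 1 / real_of_int mu) * base ^ level p
      = ((real_of_int RR - real_of_int mu) * base ^ level p) / real_of_int RR"
    using m0 by (simp add: RR_def field_simps)
  ultimately show ?thesis using RR_pos by (simp add: divide_le_eq)
qed

lemma abs_le_base_pow_level: "real_of_int \<bar>p\<bar> \<le> base ^ Suc (level p)"
proof -
  have "real_of_int \<bar>p\<bar> * real_of_int RR \<le> real_of_int (grid (Suc (level p)))"
    using grid_Suc_level_gt[of p] by (metis of_int_le_iff of_int_mult less_imp_le)
  also have "\<dots> \<le> real_of_int RR * base ^ Suc (level p)" by (rule grid_le_pow)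
  finally show ?thesis using RR_pos by (simp add: mult.commute)
qed

lemma two_le_base_pow_mu: "2 \<le> base ^ nat mu"
proof -
  have "1 + real (nat mu) * (1 / real_of_int mu) \<le> (1 + 1 / real_of_int mu) ^ nat mu"
    by (rule Bernoulli_inequality) (use mu_ge3 in \<open>simp add: field_simps\<close>)
  then show ?thesis using mu_ge3 by (simp add: base_def)
qed

lemma level_le_log:
  assumes "p \<noteq> 0" shows "real (level p) \<le> real_of_int mu * (2 + log 2 (real_of_int \<bar>p\<bar>))"
proof -
  define q where "q = level p div nat mu"
  have pa: "1 \<le> real_of_int \<bar>p\<bar>" using assms by simp
  have "(1 / 2) * base ^ level p \<le> (1 - 1 / real_of_int mu) * base ^ level p"
    using base_gt1 mu_ge3 by (intro mult_right_mono) (auto simp: field_simps)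
  also have "\<dots> \<le> real_of_int \<bar>p\<bar>" by (rule base_pow_level_le_abs[OF assms])
  finally have b1: "base ^ level p \<le> 2 * real_of_int \<bar>p\<bar>" by simp
  have "(2::real) ^ q \<le> (base ^ nat mu) ^ q" using two_le_base_pow_mu by (intro power_mono) auto
  also have "\<dots> = base ^ (nat mu * q)" by (simp add: power_mult)
  also have "\<dots> \<le> base ^ level p" using base_gt1 by (intro power_increasing) (auto simp: q_def)
  finally have "real q \<le> log 2 (2 * real_of_int \<bar>p\<bar>)"
    using b1 by (intro le_log_of_power) auto
  also have "\<dots> = 1 + log 2 (real_of_int \<bar>p\<bar>)" using pa by (subst log_mult) auto
  finally have qb: "real q \<le> 1 + log 2 (real_of_int \<bar>p\<bar>)" .
  have "level p < nat mu + q * nat mu"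
    unfolding q_def using mu_ge3 by (intro dividend_less_div_times) simp
  then have "real (level p) \<le> real (nat mu + q * nat mu)"
    by (simp only: of_nat_le_iff less_imp_le)
  also have "\<dots> = real (nat mu) * (real q + 1)" by (simp add: algebra_simps)
  also have "\<dots> \<le> real_of_int mu * (2 + log 2 (real_of_int \<bar>p\<bar>))"
    using qb mu_ge3 by (intro mult_mono) auto
  finally show ?thesis .
qed

end

locale power_scale =
  fixes N :: int
  assumes N_ge2: "2 \<le> N"
begin

definition size_le :: "nat \<Rightarrow> int \<Rightarrow> bool" where
  "size_le k x \<longleftrightarrow> \<bar>x\<bar> \<le> N ^ k"

lemma size_le_mono: "size_le i x \<Longrightarrow> i \<le> k \<Longrightarrow> size_le k x"
  unfolding size_le_def using N_ge2 by (meson order_trans power_increasing one_le_numeral le_trans)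

lemma size_le_add: "size_le k x \<Longrightarrow> size_le k y \<Longrightarrow> size_le (Suc k) (x + y)"
proof -
  assume "size_le k x" "size_le k y"
  then have "\<bar>x + y\<bar> \<le> 2 * N ^ k" unfolding size_le_def by linarith
  also have "\<dots> \<le> N * N ^ k" using N_ge2 by (intro mult_right_mono) auto
  finally show ?thesis by (simp add: size_le_def)
qed

lemma size_le_sub: "size_le k x \<Longrightarrow> size_le k y \<Longrightarrow> size_le (Suc k) (x - y)"
  using size_le_add[of k x "- y"] by (simp add: size_le_def)

lemma size_le_mult: "size_le i x \<Longrightarrow> size_le k y \<Longrightarrow> size_le (i + k) (x * y)"
  unfolding size_le_def by (simp add: abs_mult power_add mult_mono')

lemma size_le_add': "size_le k x \<Longrightarrow> size_le k y \<Longrightarrow> Suc k \<le> k' \<Longrightarrow> size_le k' (x + y)"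
  using size_le_add size_le_mono by blast

lemma size_le_sub': "size_le k x \<Longrightarrow> size_le k y \<Longrightarrow> Suc k \<le> k' \<Longrightarrow> size_le k' (x - y)"
  using size_le_sub size_le_mono by blast

lemma size_le_mult': "size_le i x \<Longrightarrow> size_le k y \<Longrightarrow> i + k \<le> k' \<Longrightarrow> size_le k' (x * y)"
  using size_le_mult size_le_mono by blast

lemma size_le_uminus: "size_le k x \<Longrightarrow> size_le k (- x)"
  by (simp add: size_le_def)

lemma size_le_abs: "size_le k x \<Longrightarrow> size_le k \<bar>x\<bar>"
  by (simp add: size_le_def)

lemma size_le_between: "0 \<le> x \<Longrightarrow> x \<le> y \<Longrightarrow> size_le k y \<Longrightarrow> size_le k x"
  unfolding size_le_def by simp

lemma size_le_0: "size_le 1 0" and size_le_1: "size_le 1 1" and size_le_2: "size_le 1 2"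
  using N_ge2 by (simp_all add: size_le_def)

end

lemma nonneg_div_mod_bounds:
  fixes K d :: int
  assumes "0 \<le> K" "0 < d"
  shows "0 \<le> K div d" "K div d \<le> K" "0 \<le> K div d * d" "K div d * d \<le> K" "0 \<le> K mod d" "K mod d \<le> K"
proof -
  show "0 \<le> K div d" "0 \<le> K div d * d" using assms by (simp_all add: pos_imp_zdiv_nonneg_iff)
  show "K div d \<le> K" using assms zdiv_mono2[of K 1 d] by simp
  show "K div d * d \<le> K" using assms minus_div_mult_eq_mod[of K d] pos_mod_sign[of d K] by linarith
  show "0 \<le> K mod d" using assms by simp
  show "K mod d \<le> K" using assms by (simp add: zmod_le_nonneg_dividend)
qed

lemma finite_feasible: "finite {S. feasible ws C S}"
  by (rule finite_subset[of _ "Pow {..<length ws}"]) (auto simp: feasible_def)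

lemma opt_eq_Max: "opt ws ps C = Max (obj ps ` {S. feasible ws C S})"
  unfolding opt_def by (simp add: image_def Setcompr_eq_image) (metis (mono_tags, lifting))

lemma obj_le_opt: "feasible ws C S \<Longrightarrow> obj ps S \<le> opt ws ps C"
  unfolding opt_eq_Max using finite_feasible by simp

lemma opt_attained:
  assumes "0 \<le> C"
  shows "\<exists>S. feasible ws C S \<and> obj ps S = opt ws ps C"
proof -
  have "feasible ws C {}" using assms by (simp add: feasible_def)
  then have "obj ps ` {S. feasible ws C S} \<noteq> {}" by blast
  then have "opt ws ps C \<in> obj ps ` {S. feasible ws C S}"
    unfolding opt_eq_Max using finite_feasible by (intro Max_in) auto
  then show ?thesis by auto
qed

text \<open>Condition (c) is what makes the optimum positive.\<close>

lemma one_le_opt: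
  assumes "pkp_instance ws ps C"
  shows "1 \<le> opt ws ps C"
proof (cases "\<exists>j<length ws. 0 < ps ! j")
  case True
  then obtain j where j: "j < length ws" "0 < ps ! j" by blast
  have "feasible ws C {j}" using j assms by (auto simp: feasible_def pkp_instance_def)
  then have "obj ps {j} \<le> opt ws ps C" by (rule obj_le_opt)
  then show ?thesis using j by (simp add: obj_def)
next
  case False
  have "0 < length ws" "\<forall>j<length ws. ps ! j \<noteq> 0" using assms by (auto simp: pkp_instance_def)
  then have "ps ! 0 < 0" using False by (meson linorder_neqE)
  then obtain j where j: "j < length ws" "j \<noteq> 0" "ps ! j < 0" "ws ! 0 + ws ! j \<le> C"
    using assms \<open>0 < length ws\<close> unfolding pkp_instance_def by blast
  have "feasible ws C {0, j}" using j by (auto simp: feasible_def)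
  then have "obj ps {0, j} \<le> opt ws ps C" by (rule obj_le_opt)
  moreover have "1 \<le> ps ! 0 * ps ! j"
    using \<open>ps ! 0 < 0\<close> j(3) by (smt (verit) mult_le_cancel_left1 mult_minus_left mult_minus_right)
  ultimately show ?thesis using j(2)
    by (simp add: obj_def) (metis of_int_1_le_iff of_int_mult order_trans)
qed

locale pkp =
  fixes ws ps :: "int list" and C M :: int
  assumes inst: "pkp_instance ws ps C" and M1: "1 \<le> M"
begin

abbreviation "n \<equiv> length ws"

definition "nI = int n"

definition "mu = 3 * nI * M"

lemma n_pos: "1 \<le> n" and lens: "length ps = n" and Cpos: "0 < C"
  and w_le: "\<And>j. j < n \<Longrightarrow> ws ! j \<le> C" and p_nz: "\<And>j. j < n \<Longrightarrow> ps ! j \<noteq> 0"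
  and w_nn: "\<And>j. j < n \<Longrightarrow> 0 \<le> ws ! j"
  using inst unfolding pkp_instance_def by auto

lemma nI_pos: "1 \<le> nI"
  using n_pos by (simp add: nI_def)

lemma mu_ge3: "3 \<le> mu"
  using nI_pos M1 mult_mono[of 1 nI 1 M] unfolding mu_def by linarith

sublocale int_rounding mu
  by unfold_locales (rule mu_ge3)

text \<open>The key of an item stores its level in the high digits and its sign in the lowest
  digit to base n + 1; as at most n items are chosen, keys of sets add without carry.\<close>

definition neg :: "nat \<Rightarrow> int" where
  "neg j = (if ps ! j < 0 then 1 else 0)"

definition item_key :: "nat \<Rightarrow> int" where
  "item_key j = (nI + 1) * (int (level (ps ! j)) + 1) + neg j"

definition key :: "nat set \<Rightarrow> int" where
  "key S = (\<Sum>j\<in>S. item_key j)"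

definition wt :: "nat set \<Rightarrow> int" where
  "wt S = (\<Sum>j\<in>S. ws ! j)"

definition "key_max = (\<Sum>j<n. item_key j)"

definition "width = key_max + 1"

text \<open>min_wt j K is the least weight of a subset of the first j items with key K, where
  C + 1 plays the role of infinity.\<close>

fun min_wt :: "nat \<Rightarrow> int \<Rightarrow> int" where
  "min_wt 0 K = (if K = 0 then 0 else C + 1)"
| "min_wt (Suc j) K =
    (if item_key j \<le> K then min (min_wt j K) (min_wt j (K - item_key j) + ws ! j) else min_wt j K)"

definition admissible :: "int \<Rightarrow> bool" where
  "admissible K \<longleftrightarrow> min_wt n K \<le> C \<and> even (K mod (nI + 1))"

definition "best_key = Max {K \<in> {0..key_max}. admissible K}"

fun backtrack :: "nat \<Rightarrow> int \<Rightarrow> nat set" where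
  "backtrack 0 K = {}"
| "backtrack (Suc j) K =
    (if min_wt (Suc j) K < min_wt j K then insert j (backtrack j (K - item_key j)) else backtrack j K)"

definition "sel = backtrack n best_key"

lemma item_key_ge: "nI + 1 \<le> item_key j"
proof -
  have "(nI + 1) * 1 \<le> (nI + 1) * (int (level (ps ! j)) + 1)"
    using nI_pos by (intro mult_left_mono) auto
  then show ?thesis unfolding item_key_def neg_def by auto
qed

lemma item_key_nonneg: "0 \<le> item_key j"
  using item_key_ge[of j] nI_pos by linarith

lemma key_nonneg: "0 \<le> key S"
  unfolding key_def using item_key_nonneg by (simp add: sum_nonneg)

lemma key_empty [simp]: "key {} = 0" and wt_empty [simp]: "wt {} = 0"
  by (simp_all add: key_def wt_def)

lemma min_wt_le: "min_wt j K \<le> C + 1"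
  using Cpos by (induction j arbitrary: K) (auto simp: min_le_iff_disj)

lemma min_wt_nonneg: "j \<le> n \<Longrightarrow> 0 \<le> min_wt j K"
proof (induction j arbitrary: K)
  case (Suc j)
  then show ?case using w_nn[of j] by (auto simp: min_def)
qed (use Cpos in simp)

lemma min_wt_Suc_le: "min_wt (Suc j) K \<le> min_wt j K"
  by auto

lemma min_wt_key_le_wt: "S \<subseteq> {..<j} \<Longrightarrow> j \<le> n \<Longrightarrow> wt S \<le> C \<Longrightarrow> min_wt j (key S) \<le> wt S"
proof (induction j arbitrary: S)
  case (Suc j)
  show ?case
  proof (cases "j \<in> S")
    case False
    then have "S \<subseteq> {..<j}" using Suc.prems(1) by (auto simp: less_Suc_eq)
    then have "min_wt j (key S) \<le> wt S" using Suc by simp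
    then show ?thesis using min_wt_Suc_le[of j "key S"] by linarith
  next
    case True
    define S' where "S' = S - {j}"
    have S'sub: "S' \<subseteq> {..<j}" using Suc.prems(1) by (auto simp: S'_def less_Suc_eq)
    have fin: "finite S" using Suc.prems(1) finite_subset by blast
    have kS: "key S = key S' + item_key j" and wS: "wt S = wt S' + ws ! j"
      unfolding key_def wt_def S'_def using True fin by (simp_all add: sum.remove)
    have "wt S' \<le> C" using wS w_nn[of j] Suc.prems by linarith
    then have IH: "min_wt j (key S') \<le> wt S'" using Suc.IH[OF S'sub] Suc.prems(2) by simp
    have "item_key j \<le> key S" using kS key_nonneg[of S'] by linarith
    then have "min_wt (Suc j) (key S) \<le> min_wt j (key S - item_key j) + ws ! j" by simp
    also have "key S - item_key j = key S'" using kS by simp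
    finally show ?thesis using IH wS by linarith
  qed
qed simp

lemma backtrack_subset: "backtrack j K \<subseteq> {..<j}"
proof (induction j arbitrary: K)
  case (Suc j)
  have "backtrack (Suc j) K \<subseteq> insert j (backtrack j (K - item_key j)) \<union> backtrack j K"
    by (simp only: backtrack.simps) auto
  then show ?case using Suc.IH[of K] Suc.IH[of "K - item_key j"] by auto
qed simp

lemma backtrack_Suc_prefix:
  fixes j :: nat and K :: int
  defines "taken \<equiv> min_wt (Suc j) K < min_wt j K"
  assumes "S \<inter> {..<Suc j} = backtrack (Suc j) K"
  shows "j \<in> S \<longleftrightarrow> taken"
    and "S \<inter> {..<j} = backtrack j (if taken then K - item_key j else K)"
proof -
  have bt: "backtrack (Suc j) K = (if taken then insert j (backtrack j (K - item_key j)) else backtrack j K)"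
    by (simp only: backtrack.simps taken_def)
  have "j \<in> S \<longleftrightarrow> j \<in> S \<inter> {..<Suc j}" "S \<inter> {..<j} = (S \<inter> {..<Suc j}) \<inter> {..<j}" by auto
  then have "j \<in> S \<longleftrightarrow> j \<in> backtrack (Suc j) K" "S \<inter> {..<j} = backtrack (Suc j) K \<inter> {..<j}"
    by (simp_all only: assms(2))
  then show "j \<in> S \<longleftrightarrow> taken" "S \<inter> {..<j} = backtrack j (if taken then K - item_key j else K)"
    unfolding bt using backtrack_subset[of j K] backtrack_subset[of j "K - item_key j"] by auto
qed

lemma backtrack_correct:
  "j \<le> n \<Longrightarrow> min_wt j K \<le> C \<Longrightarrow> key (backtrack j K) = K \<and> wt (backtrack j K) = min_wt j K"
proof (induction j arbitrary: K)
  case 0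
  then show ?case by (simp split: if_splits)
next
  case (Suc j)
  show ?case
  proof (cases "min_wt (Suc j) K < min_wt j K")
    case True
    then have eq: "min_wt (Suc j) K = min_wt j (K - item_key j) + ws ! j"
      by (auto split: if_splits simp: min_def)
    have "min_wt j (K - item_key j) \<le> C" using eq Suc.prems w_nn[of j] by linarith
    then have IH: "key (backtrack j (K - item_key j)) = K - item_key j
        \<and> wt (backtrack j (K - item_key j)) = min_wt j (K - item_key j)"
      using Suc by simp
    have "j \<notin> backtrack j (K - item_key j)" "finite (backtrack j (K - item_key j))"
      using backtrack_subset[of j "K - item_key j"] finite_subset by auto
    then show ?thesis using True IH eq by (auto simp: key_def wt_def)
  next
    case False
    then have eq: "min_wt (Suc j) K = min_wt j K" using min_wt_Suc_le[of j K] by linarith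
    then have "key (backtrack j K) = K \<and> wt (backtrack j K) = min_wt j K"
      using Suc.IH[of K] Suc.prems by simp
    then show ?thesis using False eq by auto
  qed
qed

definition neg_count :: "nat set \<Rightarrow> int" where
  "neg_count S = (\<Sum>j\<in>S. neg j)"

definition level_sum :: "nat set \<Rightarrow> nat" where
  "level_sum S = (\<Sum>j\<in>S. Suc (level (ps ! j)))"

lemma key_eq: "key S = (nI + 1) * int (level_sum S) + neg_count S"
proof -
  have "key S = (\<Sum>j\<in>S. (nI + 1) * (int (level (ps ! j)) + 1)) + neg_count S"
    unfolding key_def neg_count_def item_key_def by (simp add: sum.distrib)
  also have "(\<Sum>j\<in>S. (nI + 1) * (int (level (ps ! j)) + 1)) = (nI + 1) * (\<Sum>j\<in>S. int (level (ps ! j)) + 1)"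
    by (simp add: sum_distrib_left)
  also have "(\<Sum>j\<in>S. int (level (ps ! j)) + 1) = int (level_sum S)"
    unfolding level_sum_def by (simp add: of_nat_sum add.commute)
  finally show ?thesis .
qed

lemma neg_count_bounds:
  assumes "S \<subseteq> {..<n}" shows "0 \<le> neg_count S" "neg_count S < nI + 1"
proof -
  show "0 \<le> neg_count S" unfolding neg_count_def neg_def by (simp add: sum_nonneg)
  have "neg_count S \<le> int (card S)" unfolding neg_count_def neg_def
    using sum_mono[of S "\<lambda>j. if ps ! j < 0 then 1 else 0" "\<lambda>_. 1::int"] by simp
  also have "\<dots> \<le> int n" using card_mono[OF _ assms] by simp
  finally show "neg_count S < nI + 1" by (simp add: nI_def)
qed

lemma key_mod_eq:
  assumes "S \<subseteq> {..<n}"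
  shows "key S mod (nI + 1) = neg_count S"
  using neg_count_bounds[OF assms] by (simp add: key_eq)

lemma level_sum_mono:
  assumes "S \<subseteq> {..<n}" "T \<subseteq> {..<n}" "key S \<le> key T"
  shows "level_sum S \<le> level_sum T"
proof (rule ccontr)
  assume "\<not> level_sum S \<le> level_sum T"
  then have "(nI + 1) * (int (level_sum T) + 1) \<le> (nI + 1) * int (level_sum S)"
    using nI_pos by (intro mult_left_mono) auto
  then have "key T < key S"
    using key_eq[of S] key_eq[of T] neg_count_bounds[OF assms(1)] neg_count_bounds[OF assms(2)]
    by (simp add: algebra_simps)
  then show False using assms(3) by simp
qed

lemma prod_eq_sign_neg_count:
  "finite S \<Longrightarrow> (\<Prod>j\<in>S. real_of_int (ps ! j))
     = (if even (neg_count S) then 1 else -1) * (\<Prod>j\<in>S. real_of_int \<bar>ps ! j\<bar>)"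
proof (induction S rule: finite_induct)
  case (insert x F)
  then have "neg_count (insert x F) = neg x + neg_count F" by (simp add: neg_count_def)
  then show ?case using insert by (auto simp: neg_def abs_if)
qed (simp add: neg_count_def)

lemma obj_eq_prod_abs:
  "finite S \<Longrightarrow> S \<noteq> {} \<Longrightarrow> even (neg_count S) \<Longrightarrow> obj ps S = (\<Prod>j\<in>S. real_of_int \<bar>ps ! j\<bar>)"
  by (simp add: obj_def prod_eq_sign_neg_count)

lemma even_neg_count_if_obj_pos: "finite S \<Longrightarrow> 0 < obj ps S \<Longrightarrow> even (neg_count S)"
  using prod_eq_sign_neg_count[of S] prod_nonneg[of S "\<lambda>j. real_of_int \<bar>ps ! j\<bar>"]
  by (auto simp: obj_def split: if_splits)

lemma prod_abs_le_base_pow: "(\<Prod>j\<in>S. real_of_int \<bar>ps ! j\<bar>) \<le> base ^ level_sum S"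
proof -
  have "(\<Prod>j\<in>S. real_of_int \<bar>ps ! j\<bar>) \<le> (\<Prod>j\<in>S. base ^ Suc (level (ps ! j)))"
    using abs_le_base_pow_level by (intro prod_mono) auto
  then show ?thesis by (simp add: level_sum_def power_sum)
qed

lemma base_pow_le_prod_abs:
  assumes "S \<subseteq> {..<n}"
  shows "((1 - 1 / real_of_int mu) / base) ^ card S * base ^ level_sum S
    \<le> (\<Prod>j\<in>S. real_of_int \<bar>ps ! j\<bar>)"
proof -
  have "((1 - 1 / real_of_int mu) / base) ^ card S * base ^ level_sum S
      = (\<Prod>j\<in>S. (1 - 1 / real_of_int mu) * base ^ level (ps ! j))"
    using base_gt1
      by (simp add: level_sum_def sum_Suc power_add power_divide prod.distrib power_sum)
  also have "\<dots> \<le> (\<Prod>j\<in>S. real_of_int \<bar>ps ! j\<bar>)"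
  proof (rule prod_mono)
    fix j assume "j \<in> S"
    then have "ps ! j \<noteq> 0" using assms p_nz by auto
    moreover have "0 \<le> 1 - 1 / real_of_int mu" using mu_ge3 by (simp add: field_simps)
    ultimately show "0 \<le> (1 - 1 / real_of_int mu) * base ^ level (ps ! j)
        \<and> (1 - 1 / real_of_int mu) * base ^ level (ps ! j) \<le> real_of_int \<bar>ps ! j\<bar>"
      using base_pow_level_le_abs base_gt1 by simp
  qed
  finally show ?thesis .
qed

lemma one_sub_inverse_M_le: "1 - 1 / real_of_int M \<le> ((1 - 1 / real_of_int mu) / base) ^ n"
proof -
  have m3: "3 \<le> real_of_int mu" using mu_ge3 by simp
  have "(1 - 2 / real_of_int mu) * base \<le> 1 - 1 / real_of_int mu"
    using m3 by (simp add: base_def field_simps)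
  then have "1 - 2 / real_of_int mu \<le> (1 - 1 / real_of_int mu) / base"
    using base_gt1 by (simp add: pos_le_divide_eq)
  then have "(1 - 2 / real_of_int mu) ^ n \<le> ((1 - 1 / real_of_int mu) / base) ^ n"
    using m3 by (intro power_mono) (auto simp: field_simps)
  moreover have "1 + real n * (- 2 / real_of_int mu) \<le> (1 + (- 2 / real_of_int mu)) ^ n"
    by (rule Bernoulli_inequality) (use m3 in \<open>simp add: field_simps\<close>)
  moreover have "real n * (2 / real_of_int mu) = 2 / (3 * real_of_int M)"
  proof -
    have "ws \<noteq> []" using n_pos by auto
    then show ?thesis using M1 by (simp add: mu_def nI_def field_simps)
  qed
  moreover have "2 / (3 * real_of_int M) \<le> 1 / real_of_int M"
    using M1 by (simp add: field_simps)
  ultimately show ?thesis by (simp add: algebra_simps)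
qed

lemma key_le_key_max: "S \<subseteq> {..<n} \<Longrightarrow> key S \<le> key_max"
  unfolding key_def key_max_def using item_key_nonneg by (intro sum_mono2) auto

lemma key_max_nonneg: "0 \<le> key_max"
  using key_nonneg[of "{..<n}"] by (simp add: key_def key_max_def)

lemma admissible_0: "admissible 0"
  using min_wt_key_le_wt[of "{}" n] Cpos by (simp add: admissible_def)

lemma best_key_props:
  "admissible best_key" "0 \<le> best_key" "best_key \<le> key_max"
  "\<And>K. 0 \<le> K \<Longrightarrow> K \<le> key_max \<Longrightarrow> admissible K \<Longrightarrow> K \<le> best_key"
proof -
  let ?A = "{K \<in> {0..key_max}. admissible K}"
  have fin: "finite ?A" by (rule finite_subset[of _ "{0..key_max}"]) auto
  have "best_key \<in> ?A" unfolding best_key_def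
    using fin admissible_0 key_max_nonneg by (intro Max_in) auto
  then show "admissible best_key" "0 \<le> best_key" "best_key \<le> key_max" by auto
  fix K assume "0 \<le> K" "K \<le> key_max" "admissible K"
  then show "K \<le> best_key" unfolding best_key_def using fin by (intro Max_ge) auto
qed

lemma sel_props: "sel \<subseteq> {..<n}" "key sel = best_key" "wt sel \<le> C"
  using backtrack_correct[of n best_key] backtrack_subset[of n best_key] best_key_props(1)
  unfolding sel_def admissible_def by auto

lemma feasible_sel: "feasible ws C sel"
  using sel_props unfolding feasible_def wt_def by auto

lemma key_pos:
  assumes "finite S" "S \<noteq> {}"
  shows "0 < key S"
proof -
  obtain j where "j \<in> S" using assms(2) by blast
  then have "item_key j \<le> key S"
    unfolding key_def using assms(1) item_key_nonneg by (intro member_le_sum) auto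
  then show ?thesis using item_key_ge[of j] nI_pos by linarith
qed

theorem sel_approx: "(1 - 1 / real_of_int M) * opt ws ps C \<le> obj ps sel"
proof -
  let ?r = "(1 - 1 / real_of_int mu) / base"
  obtain S where "feasible ws C S" and S_opt: "obj ps S = opt ws ps C"
    using opt_attained Cpos by (metis less_imp_le)
  then have S: "S \<subseteq> {..<n}" "wt S \<le> C" "finite S"
    unfolding feasible_def wt_def using finite_subset by auto
  have "1 \<le> obj ps S" using S_opt one_le_opt[OF inst] by simp
  then have "S \<noteq> {}" and S_even: "even (neg_count S)"
    using even_neg_count_if_obj_pos[OF S(3)] by (auto simp: obj_def)
  have "admissible (key S)"
    using min_wt_key_le_wt[OF S(1) _ S(2)] key_mod_eq[OF S(1)] S_even S(2)
    by (auto simp: admissible_def)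
  then have key_S: "key S \<le> key sel"
    using best_key_props(4) key_nonneg key_le_key_max[OF S(1)] sel_props(2) by simp
  then have "sel \<noteq> {}" using key_pos[OF S(3) \<open>S \<noteq> {}\<close>] by auto
  have sel_fin: "finite sel" using sel_props(1) finite_subset by blast
  have sel_even: "even (neg_count sel)"
    using best_key_props(1) key_mod_eq[OF sel_props(1)] sel_props(2) by (simp add: admissible_def)
  have opt_le: "opt ws ps C \<le> base ^ level_sum sel"
  proof -
    have "opt ws ps C \<le> base ^ level_sum S"
      using S_opt obj_eq_prod_abs[OF S(3) \<open>S \<noteq> {}\<close> S_even] prod_abs_le_base_pow[of S] by simp
    also have "\<dots> \<le> base ^ level_sum sel"
      using level_sum_mono[OF S(1) sel_props(1) key_S] base_gt1 by (intro power_increasing) auto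
    finally show ?thesis .
  qed
  have "0 \<le> 1 / real_of_int mu" "1 / real_of_int mu \<le> 1" using mu_ge3 by simp_all
  then have "0 \<le> 1 - 1 / real_of_int mu" "1 - 1 / real_of_int mu \<le> base" using base_gt1 by linarith+
  then have r: "0 \<le> ?r" "?r \<le> 1" using base_gt1 by simp_all
  have "(1 - 1 / real_of_int M) * opt ws ps C \<le> ?r ^ n * opt ws ps C"
    using one_sub_inverse_M_le one_le_opt[OF inst] by (intro mult_right_mono) auto
  also have "\<dots> \<le> ?r ^ card sel * opt ws ps C"
    using r card_mono[OF _ sel_props(1)] one_le_opt[OF inst]
    by (intro mult_right_mono power_decreasing) auto
  also have "\<dots> \<le> ?r ^ card sel * base ^ level_sum sel"
    using r opt_le by (intro mult_left_mono) auto
  also have "\<dots> \<le> obj ps sel"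
    using base_pow_le_prod_abs[OF sel_props(1)] obj_eq_prod_abs[OF sel_fin \<open>sel \<noteq> {}\<close> sel_even]
    by simp
  finally show ?thesis .
qed

definition "N0 = 2 + nI + C + pmax ps + M"

definition "word_max = N0 ^ 20"

abbreviation "prog_runs \<equiv> runs_to (prog M) word_max"

definition "key_addr = 2 * nI + 2"

definition "table_addr = 3 * nI + 2"

definition "mem0 = snd (init ws ps C)"

definition "key_psum j = (\<Sum>i<j. item_key i)"

lemma abs_le_pmax: "j < n \<Longrightarrow> \<bar>ps ! j\<bar> \<le> pmax ps"
  unfolding pmax_def using lens by (intro Max_ge) auto

lemma one_le_pmax: "1 \<le> pmax ps"
  unfolding pmax_def by (intro Max_ge) auto

lemma N0_ge6: "6 \<le> N0"
  using nI_pos Cpos M1 one_le_pmax by (simp add: N0_def)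

sublocale power_scale N0
  by unfold_locales (use N0_ge6 in simp)

lemma key_addr_pos: "0 < key_addr"
  using nI_pos by (simp add: key_addr_def)

lemma table_addr_pos: "0 < table_addr"
  using nI_pos by (simp add: table_addr_def)

lemma table_addr_eq: "table_addr = key_addr + nI"
  by (simp add: table_addr_def key_addr_def)

lemma key_psum_n: "key_psum n = key_max"
  by (simp add: key_psum_def key_max_def)

lemma width_pos: "1 \<le> width"
  using key_max_nonneg by (simp add: width_def)

lemma width_nonneg: "0 \<le> width"
  using width_pos by simp

lemma row_offset_nonneg: "0 \<le> int r * width"
  using width_pos by simp

lemma cell_addr_less: "j' \<le> r \<Longrightarrow> K' < width \<Longrightarrow> 0 \<le> K \<Longrightarrow> int j' * width + K' < int r * width + width + K"
proof -
  assume a: "j' \<le> r" "K' < width" "0 \<le> K"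
  have "int j' * width \<le> int r * width" using a(1) width_nonneg by (intro mult_right_mono) auto
  then show ?thesis using a by linarith
qed

lemma best_key_lt_width: "best_key < width"
  using best_key_props(3) by (simp add: width_def)

lemma size_le_nI: "size_le 1 nI" and size_le_C: "size_le 1 C" and size_le_M: "size_le 1 M"
  and size_le_3: "size_le 1 3"
  unfolding size_le_def using nI_pos Cpos M1 one_le_pmax N0_ge6 by (auto simp: N0_def)

lemma size_le_p: "j < n \<Longrightarrow> size_le 1 (ps ! j)"
  unfolding size_le_def using abs_le_pmax[of j] nI_pos Cpos M1 by (auto simp: N0_def)

lemma size_le_w: "j < n \<Longrightarrow> size_le 1 (ws ! j)"
  unfolding size_le_def using w_le[of j] w_nn[of j] nI_pos Cpos M1 one_le_pmax
    by (auto simp: N0_def)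

lemma size_le_j: "j \<le> n \<Longrightarrow> size_le 1 (int j)"
  unfolding size_le_def using nI_pos Cpos M1 one_le_pmax by (auto simp: N0_def nI_def)

lemma fits_if_size_le: "size_le k x \<Longrightarrow> k \<le> 20 \<Longrightarrow> fits word_max x"
  unfolding fits_def word_max_def using size_le_mono size_le_def by blast

lemma size_le_mu: "size_le 3 mu"
  unfolding mu_def using size_le_mult[OF size_le_mult[OF size_le_3 size_le_nI] size_le_M]
  by (simp add: eval_nat_numeral)

lemma size_le_RR: "size_le 6 RR"
  unfolding RR_def using size_le_mult[OF size_le_mu size_le_mu] by (simp add: eval_nat_numeral)

lemma size_le_abs_profit_RR: "j < n \<Longrightarrow> size_le 7 (\<bar>ps ! j\<bar> * RR)"
  using size_le_mult[OF size_le_abs[OF size_le_p] size_le_RR] by (simp add: eval_nat_numeral)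

lemma size_le_grid:
  assumes "j < n" "k \<le> level (ps ! j)"
  shows "size_le 7 (grid k)"
proof -
  have "grid k \<le> \<bar>ps ! j\<bar> * RR" using grid_mono[OF assms(2)] grid_level_le[OF p_nz[OF assms(1)]]
    by linarith
  then show ?thesis using size_le_abs_profit_RR[OF assms(1)] grid_pos[of k] unfolding size_le_def
    by simp
qed

lemma size_le_grid_Suc:
  assumes "j < n" "k \<le> level (ps ! j)"
  shows "size_le 8 (grid (Suc k))"
proof -
  have "size_le 8 (grid k + grid k)"
    using size_le_add[OF size_le_grid[OF assms] size_le_grid[OF assms]]
    by (simp add: eval_nat_numeral)
  then show ?thesis using grid_Suc_le_double[of k] grid_pos[of "Suc k"] grid_pos[of k]
    unfolding size_le_def by simp
qed

lemma size_le_level: "j < n \<Longrightarrow> size_le 4 (int (level (ps ! j)))"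
proof -
  assume j: "j < n"
  have "size_le 4 (\<bar>ps ! j\<bar> * mu)" using size_le_mult[OF size_le_abs[OF size_le_p[OF j]] size_le_mu]
    by (simp add: eval_nat_numeral)
  then show ?thesis using level_le[OF p_nz[OF j]] unfolding size_le_def by simp
qed

lemma size_le_k:
  assumes "j < n" "k \<le> level (ps ! j)"
  shows "size_le 4 (int k)"
proof -
  have "int k \<le> int (level (ps ! j))" using assms by simp
  then show ?thesis using size_le_level[OF assms(1)] unfolding size_le_def by simp
qed

lemma size_le_neg: "size_le 1 (neg j)"
  unfolding neg_def using size_le_0 size_le_1 by auto

lemma size_le_item_key: "j < n \<Longrightarrow> size_le 8 (item_key j)"
proof -
  assume j: "j < n"
  have a: "size_le 5 (int (level (ps ! j)) + 1)"
    using size_le_add[OF size_le_level[OF j] size_le_mono[OF size_le_1, of 4]]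
    by (simp add: eval_nat_numeral)
  have b: "size_le 2 (nI + 1)" using size_le_add[OF size_le_nI size_le_1]
    by (simp add: eval_nat_numeral)
  have "size_le 7 ((nI + 1) * (int (level (ps ! j)) + 1))" using size_le_mult[OF b a] by simp
  then show ?thesis unfolding item_key_def
    using size_le_add[OF _ size_le_mono[OF size_le_neg, of 7]] by (simp add: eval_nat_numeral)
qed

lemma size_le_key_psum:
  assumes "j \<le> n"
  shows "size_le 9 (key_psum j)"
proof -
  have "key_psum j \<le> (\<Sum>i<j. N0 ^ 8)" unfolding key_psum_def
  proof (intro sum_mono)
    fix i assume "i \<in> {..<j}"
    then have "size_le 8 (item_key i)" using size_le_item_key assms by simp
    then show "item_key i \<le> N0 ^ 8" unfolding size_le_def by simp
  qed
  also have "\<dots> = int j * N0 ^ 8" by simp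
  also have "\<dots> \<le> N0 * N0 ^ 8" using size_le_j[OF assms] N0_ge6 unfolding size_le_def
    by (intro mult_right_mono) auto
  also have "N0 * N0 ^ 8 = N0 ^ 9" by (simp add: eval_nat_numeral)
  finally have "key_psum j \<le> N0 ^ 9" .
  moreover have "0 \<le> key_psum j" unfolding key_psum_def using item_key_nonneg
    by (simp add: sum_nonneg)
  ultimately show ?thesis unfolding size_le_def by simp
qed

lemma size_le_key_max: "size_le 9 key_max"
  using size_le_key_psum[of n] key_psum_n by simp

lemma size_le_width: "size_le 10 width"
  unfolding width_def by (rule size_le_add'[OF size_le_key_max size_le_mono[OF size_le_1]]) auto

lemma size_le_table_addr: "size_le 3 table_addr"
  unfolding table_addr_def
  by (rule size_le_add'[OF size_le_mult'[OF size_le_3 size_le_nI] size_le_mono[OF size_le_2]]) auto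

lemma size_le_key_addr: "size_le 3 key_addr"
  unfolding key_addr_def
  by (rule size_le_add'[OF size_le_mult'[OF size_le_2 size_le_nI] size_le_mono[OF size_le_2]]) auto

lemma size_le_min_wt: "j \<le> n \<Longrightarrow> size_le 2 (min_wt j K)"
proof -
  assume j: "j \<le> n"
  have "\<bar>min_wt j K\<bar> \<le> C + 1" using min_wt_nonneg[OF j] min_wt_le[of j K] by simp
  also have "\<dots> \<le> N0" using nI_pos one_le_pmax M1 by (simp add: N0_def)
  also have "\<dots> = N0 ^ 1" by simp
  also have "\<dots> \<le> N0 ^ 2" using N0_ge6 by (intro power_increasing) auto
  finally show ?thesis by (simp add: size_le_def)
qed

lemma size_le_rowaddr: "r \<le> n \<Longrightarrow> size_le 11 (int r * width)"
  by (rule size_le_mult'[OF size_le_j size_le_width]) auto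

lemma mem0_0: "mem0 0 = nI" and mem0_1: "mem0 1 = C"
  by (simp_all add: mem0_def init_def nI_def)

lemma mem0_neg: "a < 0 \<Longrightarrow> mem0 a = 0"
  by (simp add: mem0_def init_def)

lemma mem0_high: "key_addr \<le> a \<Longrightarrow> mem0 a = 0"
  using nI_pos by (simp add: mem0_def init_def key_addr_def nI_def)

lemma mem0_weight: "i < n \<Longrightarrow> mem0 (2 * int i + 2) = ws ! i"
  by (simp add: mem0_def init_def)

lemma mem0_profit: "i < n \<Longrightarrow> mem0 (2 * int i + 3) = ps ! i"
proof -
  assume i: "i < n"
  have "(2 * int i + 3 - 2) div 2 = int i" by simp
  then show ?thesis using i by (simp add: mem0_def init_def)
qed

lemma mem_bounded_mem0: "mem_bounded word_max mem0"
  unfolding mem_bounded_def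
proof
  fix a
  have "size_le 1 (mem0 a)"
    unfolding mem0_def init_def using size_le_nI size_le_C size_le_0 size_le_w size_le_p nI_def
    by (auto simp: nat_less_iff)
  then show "\<bar>mem0 a\<bar> \<le> word_max" using fits_if_size_le[of 1 "mem0 a"] by (simp add: fits_def)
qed

lemma init_eq: "init ws ps C = (0, mem0)"
  by (simp add: mem0_def init_def)

definition consts_stored :: "(int \<Rightarrow> int) \<Rightarrow> bool" where
  "consts_stored m \<longleftrightarrow> m (-1) = 1 \<and> m (-15) = 2 \<and> m (-16) = 3 \<and> m (-30) = 0 \<and> m (-2) = nI
    \<and> m (-3) = C + 1 \<and> m (-4) = mu \<and> m (-5) = RR \<and> m (-6) = mu + 1 \<and> m (-7) = nI + 1
    \<and> m (-10) = key_addr \<and> m (-11) = table_addr"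

definition levels_inv :: "nat \<Rightarrow> (int \<Rightarrow> int) \<Rightarrow> bool" where
  "levels_inv j m \<longleftrightarrow> consts_stored m \<and> mem_bounded word_max m \<and> m (-8) = int j \<and> m (-9) = key_psum j
    \<and> (\<forall>a. 0 \<le> a \<longrightarrow> a < key_addr \<longrightarrow> m a = mem0 a) \<and> (\<forall>i<j. m (key_addr + int i) = item_key i)
    \<and> (\<forall>a. key_addr + int j \<le> a \<longrightarrow> m a = 0)"

lemma setup_phase: "prog_runs 0 mem0 15 15 (levels_inv 0)"
proof -
  have f: "mem0 0 = nI" "mem0 1 = C" "mem0 (-30) = 0" "mem_bounded word_max mem0"
    using mem0_0 mem0_1 mem0_neg mem_bounded_mem0 by auto
  have b: "fits word_max 1" "fits word_max 2" "fits word_max 3" "fits word_max nI"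
    "fits word_max (C + 1)" "fits word_max M" "fits word_max (nI * M)"
    "fits word_max (nI * M + nI * M)" "fits word_max (nI * M + nI * M + nI * M)"
    "fits word_max ((nI * M + nI * M + nI * M) * (nI * M + nI * M + nI * M))"
    "fits word_max (nI * M + nI * M + nI * M + 1)" "fits word_max (nI + 1)"
      "fits word_max (nI + nI)" "fits word_max (nI + nI + 2)"
    "fits word_max (nI + nI + 2 + nI)"
  proof -
    have m: "size_le 2 (nI * M)" using size_le_mult[OF size_le_nI size_le_M]
      by (simp add: eval_nat_numeral)
    have m2: "size_le 3 (nI * M + nI * M)" using size_le_add[OF m m] by (simp add: eval_nat_numeral)
    have m3: "size_le 4 (nI * M + nI * M + nI * M)"
      using size_le_add[OF m2 size_le_mono[OF m, of 3]] by (simp add: eval_nat_numeral)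
    have n2: "size_le 2 (nI + nI)" using size_le_add[OF size_le_nI size_le_nI]
      by (simp add: eval_nat_numeral)
    have n3: "size_le 3 (nI + nI + 2)" using size_le_add[OF n2 size_le_mono[OF size_le_2, of 2]]
      by (simp add: eval_nat_numeral)
    show "fits word_max 1" "fits word_max 2" "fits word_max 3" "fits word_max nI" "fits word_max M"
      "fits word_max (nI * M)"
      "fits word_max (nI * M + nI * M)" "fits word_max (nI * M + nI * M + nI * M)"
        "fits word_max (nI + nI)" "fits word_max (nI + nI + 2)"
      using fits_if_size_le size_le_1 size_le_2 size_le_3 size_le_nI size_le_M m m2 m3 n2 n3 by auto
    show "fits word_max (C + 1)" using fits_if_size_le[OF size_le_add[OF size_le_C size_le_1]]
      by simp
    show "fits word_max (nI + 1)" using fits_if_size_le[OF size_le_add[OF size_le_nI size_le_1]]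
      by simp
    show "fits word_max ((nI * M + nI * M + nI * M) * (nI * M + nI * M + nI * M))"
      using fits_if_size_le[OF size_le_mult[OF m3 m3]] by simp
    show "fits word_max (nI * M + nI * M + nI * M + 1)"
      using fits_if_size_le[OF size_le_add[OF m3 size_le_mono[OF size_le_1, of 4]]] by simp
    show "fits word_max (nI + nI + 2 + nI)"
      using fits_if_size_le[OF size_le_add[OF n3 size_le_mono[OF size_le_nI, of 3]]] by simp
  qed
  show ?thesis
    apply (insert f b)
    \<comment> \<open>One instruction per round; the side conditions of runs_to_step must be solved
      outright, which fails once the step budget is used up and so ends the repetition.\<close>
    apply (rule runs_to_step, (simp add: prog_exec_simps; fail)+,
      simp del: exec.simps add: prog_exec_simps, (simp only: pc_numeral_simps)?)+
    apply (rule runs_to_done)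
     apply (simp add: mem_bounded_upd)
    apply (simp only: levels_inv_def consts_stored_def RR_def)
    apply (simp add: mem_bounded_upd mu_def key_addr_def table_addr_def key_psum_def algebra_simps)
    using mem0_high mem0_neg key_addr_pos apply (auto simp: key_addr_def)
    done
qed

definition level_inv :: "nat \<Rightarrow> nat \<Rightarrow> (int \<Rightarrow> int) \<Rightarrow> bool" where
  "level_inv j k m \<longleftrightarrow> consts_stored m \<and> mem_bounded word_max m \<and> m (-8) = int j \<and> m (-9) = key_psum j
    \<and> (\<forall>a. 0 \<le> a \<longrightarrow> a < key_addr \<longrightarrow> m a = mem0 a) \<and> (\<forall>i<j. m (key_addr + int i) = item_key i)
    \<and> (\<forall>a. key_addr + int j \<le> a \<longrightarrow> m a = 0)
    \<and> m (-19) = neg j \<and> m (-20) = \<bar>ps ! j\<bar> * RR \<and> m (-21) = int k \<and> m (-22) = grid k \<and> k \<le> level (ps ! j)"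

lemma level_entry_fits:
  assumes j: "j < n"
  shows "fits word_max (nI - int j)" "fits word_max (int j + int j)"
    "fits word_max (int j + int j + 3)" "fits word_max (ps ! j)"
    "fits word_max (- ps ! j)" "fits word_max 1" "fits word_max 0" "fits word_max (\<bar>ps ! j\<bar> * RR)"
      "fits word_max RR"
proof -
  have jj: "size_le 2 (int j + int j)"
    by (rule size_le_add'[OF size_le_j size_le_j]) (use j in auto)
  show "fits word_max (nI - int j)"
    by (rule fits_if_size_le[OF size_le_sub'[OF size_le_nI size_le_j]]) (use j in auto)
  show "fits word_max (int j + int j)" using fits_if_size_le[OF jj] by simp
  show "fits word_max (int j + int j + 3)"
    by (rule fits_if_size_le[OF size_le_add'[OF jj size_le_mono[OF size_le_3, of 2]]]) auto
  show "fits word_max (ps ! j)" "fits word_max (- ps ! j)"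
    using fits_if_size_le[OF size_le_p[OF j]] fits_if_size_le[OF size_le_uminus[OF size_le_p[OF j]]]
    by auto
  show "fits word_max 1" "fits word_max 0"
    using fits_if_size_le[OF size_le_1] fits_if_size_le[OF size_le_0] by auto
  show "fits word_max (\<bar>ps ! j\<bar> * RR)" using fits_if_size_le[OF size_le_abs_profit_RR[OF j]] by simp
  show "fits word_max RR" using fits_if_size_le[OF size_le_RR] by simp
qed

lemma level_inv_0:
  assumes I: "levels_inv j m"
    and upd: "mem_bounded word_max m'" "\<forall>a. 0 \<le> a \<longrightarrow> m' a = m a"
      "\<forall>a\<in>{-1,-15,-16,-30,-2,-3,-4,-5,-6,-7,-10,-11,-8,-9}. m' a = m a"
    "m' (-19) = neg j" "m' (-20) = \<bar>ps ! j\<bar> * RR" "m' (-21) = 0" "m' (-22) = RR"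
  shows "level_inv j 0 m'"
proof -
  have "consts_stored m'" using I upd unfolding levels_inv_def consts_stored_def by auto
  moreover have "\<forall>a. 0 \<le> a \<longrightarrow> a < key_addr \<longrightarrow> m' a = mem0 a"
    "\<forall>i<j. m' (key_addr + int i) = item_key i"
    "\<forall>a. key_addr + int j \<le> a \<longrightarrow> m' a = 0"
    using I upd(2) key_addr_pos unfolding levels_inv_def by auto
  ultimately show ?thesis using I upd unfolding level_inv_def levels_inv_def by auto
qed

lemma level_entry:
  assumes j: "j < n" and I: "levels_inv j m"
  shows "prog_runs 15 m 12 29 (level_inv j 0)"
proof -
  have v: "m (-1) = 1" "m (-15) = 2" "m (-16) = 3" "m (-30) = 0" "m (-2) = nI" "m (-3) = C + 1"
    "m (-4) = mu" "m (-5) = RR" "m (-6) = mu + 1" "m (-7) = nI + 1" "m (-10) = key_addr"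
      "m (-11) = table_addr"
    "m (-8) = int j" "mem_bounded word_max m"
    using I unfolding levels_inv_def consts_stored_def by auto
  have inp: "m (int j + int j + 3) = ps ! j"
  proof -
    have "int j + int j + 3 < key_addr" using j by (simp add: key_addr_def nI_def)
    then have "m (int j + int j + 3) = mem0 (int j + int j + 3)" using I unfolding levels_inv_def
      by auto
    moreover have "int j + int j + 3 = 2 * int j + 3" by simp
    ultimately show ?thesis using mem0_profit[OF j] by simp
  qed
  have jn: "0 < nI - int j" using j by (simp add: nI_def)
  note b = level_entry_fits[OF j]
  have post: "level_inv j 0 m'" if "mem_bounded word_max m'" "\<forall>a. 0 \<le> a \<longrightarrow> m' a = m a"
    "\<forall>a\<in>{-1,-15,-16,-30,-2,-3,-4,-5,-6,-7,-10,-11,-8,-9}. m' a = m a"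
    "m' (-19) = neg j" "m' (-20) = \<bar>ps ! j\<bar> * RR" "m' (-21) = 0" "m' (-22) = RR" for m'
    using level_inv_0[OF I that] .
  show ?thesis
  proof (cases "0 < ps ! j")
    case True
    show ?thesis
      apply (rule runs_to_mono[where T=10 and Q="level_inv j 0"])
        prefer 2 apply simp
       prefer 2 apply assumption
      apply (insert v inp jn b True)
      apply (rule runs_to_step, (simp add: prog_exec_simps; fail)+,
      simp del: exec.simps add: prog_exec_simps, (simp only: pc_numeral_simps)?)+
      apply (rule runs_to_done)
       apply (simp add: mem_bounded_upd)
      apply (rule post)
      apply (auto simp: neg_def mem_bounded_upd)
      done
  next
    case False
    then have Fn: "ps ! j < 0" using p_nz[OF j] by linarith
    show ?thesis
      apply (insert v inp jn b Fn)
      apply (rule runs_to_step, (simp add: prog_exec_simps; fail)+,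
      simp del: exec.simps add: prog_exec_simps, (simp only: pc_numeral_simps)?)+
      apply (rule runs_to_done)
       apply (simp add: mem_bounded_upd)
      apply (rule post)
      apply (auto simp: neg_def mem_bounded_upd)
      done
  qed
qed

lemma level_invD: "level_inv j k m \<Longrightarrow> m (-1) = 1 \<and> m (-15) = 2 \<and> m (-16) = 3 \<and> m (-30) = 0 \<and> m (-2) = nI \<and> m (-3) = C + 1
    \<and> m (-4) = mu \<and> m (-5) = RR \<and> m (-6) = mu + 1 \<and> m (-7) = nI + 1 \<and> m (-10) = key_addr \<and> m (-11) = table_addr
    \<and> m (-8) = int j \<and> m (-9) = key_psum j \<and> m (-19) = neg j \<and> m (-20) = \<bar>ps ! j\<bar> * RR \<and> m (-21) = int k \<and> m (-22) = grid k
    \<and> mem_bounded word_max m \<and> k \<le> level (ps ! j)"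
  unfolding level_inv_def consts_stored_def by auto

lemma level_step:
  assumes j: "j < n" and k: "k < level (ps ! j)" and I: "level_inv j k m"
  shows "prog_runs 29 m 7 29 (level_inv j (Suc k))"
proof -
  note v = level_invD[OF I]
  have c: "grid k * (mu + 1) div mu \<le> \<bar>ps ! j\<bar> * RR" using grid_Suc_le_if_less_level[OF k] by simp
  have kk: "k \<le> level (ps ! j)" using k by simp
  have b: "fits word_max (grid k * (mu + 1))" "fits word_max (grid k * (mu + 1) div mu)"
    "fits word_max (grid k * (mu + 1) div mu - \<bar>ps ! j\<bar> * RR)" "fits word_max (int k + 1)"
  proof -
    have m1: "size_le 4 (mu + 1)"
      by (rule size_le_add'[OF size_le_mu size_le_mono[OF size_le_1, of 3]]) auto
    show "fits word_max (grid k * (mu + 1))"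
      by (rule fits_if_size_le[OF size_le_mult'[OF size_le_grid[OF j kk] m1]]) auto
    have y: "size_le 8 (grid k * (mu + 1) div mu)" using size_le_grid_Suc[OF j kk] by simp
    show "fits word_max (grid k * (mu + 1) div mu)" by (rule fits_if_size_le[OF y]) auto
    show "fits word_max (grid k * (mu + 1) div mu - \<bar>ps ! j\<bar> * RR)"
      by (rule fits_if_size_le[OF size_le_sub'[OF y size_le_mono[OF size_le_abs_profit_RR[OF j], of 8]]]) auto
    show "fits word_max (int k + 1)"
      by (rule fits_if_size_le[OF size_le_add'[OF size_le_k[OF j kk] size_le_mono[OF size_le_1, of 4]]]) auto
  qed
  have post: "level_inv j (Suc k) m'" if "mem_bounded word_max m'" "\<forall>a. 0 \<le> a \<longrightarrow> m' a = m a"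
    "\<forall>a\<in>{-1,-15,-16,-30,-2,-3,-4,-5,-6,-7,-10,-11,-8,-9,-19,-20}. m' a = m a"
    "m' (-21) = int k + 1" "m' (-22) = grid k * (mu + 1) div mu" for m'
  proof -
    have "consts_stored m'" using I that unfolding level_inv_def consts_stored_def by auto
    moreover have "\<forall>a. 0 \<le> a \<longrightarrow> a < key_addr \<longrightarrow> m' a = mem0 a"
      "\<forall>i<j. m' (key_addr + int i) = item_key i"
      "\<forall>a. key_addr + int j \<le> a \<longrightarrow> m' a = 0"
      using I that(2) key_addr_pos unfolding level_inv_def by auto
    ultimately show ?thesis using I that k unfolding level_inv_def by auto
  qed
  show ?thesis
    apply (insert v c b)
    apply (rule runs_to_step, (simp add: prog_exec_simps; fail)+,
      simp del: exec.simps add: prog_exec_simps, (simp only: pc_numeral_simps)?)+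
    apply (rule runs_to_done)
     apply (simp add: mem_bounded_upd)
    apply (rule post)
    apply (auto simp: mem_bounded_upd)
    done
qed

lemma level_exit_fits:
  assumes j: "j < n"
  defines "k \<equiv> level (ps ! j)"
  shows "fits word_max (grid k * (mu + 1))" "fits word_max (grid k * (mu + 1) div mu)"
    "fits word_max (grid k * (mu + 1) div mu - \<bar>ps ! j\<bar> * RR)" "fits word_max (int k + 1)"
    "fits word_max ((int k + 1) * (nI + 1))" "fits word_max ((int k + 1) * (nI + 1) + neg j)"
      "fits word_max (key_addr + int j)"
    "fits word_max (key_psum j + ((int k + 1) * (nI + 1) + neg j))" "fits word_max (int j + 1)"
proof -
  have kk: "k \<le> level (ps ! j)" by (simp add: k_def)
  have m1: "size_le 4 (mu + 1)"
    by (rule size_le_add'[OF size_le_mu size_le_mono[OF size_le_1, of 3]]) auto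
  show "fits word_max (grid k * (mu + 1))"
    by (rule fits_if_size_le[OF size_le_mult'[OF size_le_grid[OF j kk] m1]]) auto
  have y: "size_le 8 (grid k * (mu + 1) div mu)" using size_le_grid_Suc[OF j kk] by simp
  show "fits word_max (grid k * (mu + 1) div mu)" by (rule fits_if_size_le[OF y]) auto
  show "fits word_max (grid k * (mu + 1) div mu - \<bar>ps ! j\<bar> * RR)"
    by (rule fits_if_size_le[OF size_le_sub'[OF y size_le_mono[OF size_le_abs_profit_RR[OF j], of 8]]]) auto
  have k1: "size_le 5 (int k + 1)"
    by (rule size_le_add'[OF size_le_k[OF j kk] size_le_mono[OF size_le_1, of 4]]) auto
  show "fits word_max (int k + 1)" by (rule fits_if_size_le[OF k1]) auto
  have n1: "size_le 2 (nI + 1)" by (rule size_le_add'[OF size_le_nI size_le_1]) auto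
  have kn: "size_le 7 ((int k + 1) * (nI + 1))" by (rule size_le_mult'[OF k1 n1]) auto
  show "fits word_max ((int k + 1) * (nI + 1))" by (rule fits_if_size_le[OF kn]) auto
  have ddj: "(int k + 1) * (nI + 1) + neg j = item_key j"
    by (simp add: item_key_def k_def algebra_simps)
  show "fits word_max ((int k + 1) * (nI + 1) + neg j)" unfolding ddj
    by (rule fits_if_size_le[OF size_le_item_key[OF j]]) auto
  have a1: "size_le 3 key_addr" unfolding key_addr_def
    by (rule size_le_add'[OF size_le_mult'[OF size_le_2 size_le_nI] size_le_mono[OF size_le_2]]) auto
  show "fits word_max (key_addr + int j)"
    by (rule fits_if_size_le[OF size_le_add'[OF a1 size_le_mono[OF size_le_j]]]) (use j in auto)
  show "fits word_max (key_psum j + ((int k + 1) * (nI + 1) + neg j))" unfolding ddj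
    by (rule fits_if_size_le[OF size_le_add'[OF size_le_key_psum size_le_mono[OF size_le_item_key[OF j]]]]) (use j in auto)
  show "fits word_max (int j + 1)"
    by (rule fits_if_size_le[OF size_le_add'[OF size_le_j size_le_1]]) (use j in auto)
qed

lemma levels_inv_Suc:
  fixes j :: nat
  defines "k \<equiv> level (ps ! j)"
  assumes I: "level_inv j k m"
    and upd: "mem_bounded word_max m'" "\<forall>a. 0 \<le> a \<longrightarrow> a \<noteq> key_addr + int j \<longrightarrow> m' a = m a"
    "\<forall>a\<in>{-1,-15,-16,-30,-2,-3,-4,-5,-6,-7,-10,-11}. m' a = m a"
    "m' (-8) = int j + 1" "m' (-9) = key_psum j + ((int k + 1) * (nI + 1) + neg j)"
    "m' (key_addr + int j) = (int k + 1) * (nI + 1) + neg j"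
  shows "levels_inv (Suc j) m'"
proof -
  have ddj: "(int k + 1) * (nI + 1) + neg j = item_key j"
    by (simp add: item_key_def k_def algebra_simps)
  have "consts_stored m'" using I upd unfolding level_inv_def consts_stored_def by auto
  moreover have "\<forall>a. 0 \<le> a \<longrightarrow> a < key_addr \<longrightarrow> m' a = mem0 a" using I upd(2) key_addr_pos
    unfolding level_inv_def by auto
  moreover have "\<forall>i<Suc j. m' (key_addr + int i) = item_key i"
  proof (intro allI impI)
    fix i assume "i < Suc j"
    then show "m' (key_addr + int i) = item_key i"
      using I upd(2,6) key_addr_pos ddj unfolding level_inv_def by (cases "i = j") auto
  qed
  moreover have "\<forall>a. key_addr + int (Suc j) \<le> a \<longrightarrow> m' a = 0" using I upd(2) key_addr_pos
    unfolding level_inv_def by auto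
  moreover have "key_psum (Suc j) = key_psum j + item_key j" by (simp add: key_psum_def)
  ultimately show ?thesis using upd ddj unfolding levels_inv_def by auto
qed

lemma level_exit:
  assumes j: "j < n" and I: "level_inv j (level (ps ! j)) m"
  shows "prog_runs 29 m 12 15 (levels_inv (Suc j))"
proof -
  define k where "k = level (ps ! j)"
  have I': "level_inv j k m" using I by (simp add: k_def)
  note v = level_invD[OF I']
  have c: "\<bar>ps ! j\<bar> * RR < grid k * (mu + 1) div mu" using grid_Suc_level_gt[of "ps ! j"]
    by (simp add: k_def)
  have A: "0 < key_addr" by (rule key_addr_pos)
  note b = level_exit_fits[OF j, folded k_def]
  have post: "levels_inv (Suc j) m'" if "mem_bounded word_max m'"
    "\<forall>a. 0 \<le> a \<longrightarrow> a \<noteq> key_addr + int j \<longrightarrow> m' a = m a"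
    "\<forall>a\<in>{-1,-15,-16,-30,-2,-3,-4,-5,-6,-7,-10,-11}. m' a = m a"
    "m' (-8) = int j + 1" "m' (-9) = key_psum j + ((int k + 1) * (nI + 1) + neg j)"
    "m' (key_addr + int j) = (int k + 1) * (nI + 1) + neg j" for m'
    using levels_inv_Suc[OF I that[unfolded k_def]] .
  show ?thesis
    apply (insert v c b A)
    apply (rule runs_to_step, (simp add: prog_exec_simps; fail)+,
      simp del: exec.simps add: prog_exec_simps, (simp only: pc_numeral_simps)?)+
    apply (rule runs_to_done)
     apply (simp add: mem_bounded_upd)
    apply (rule post)
    apply (auto simp: mem_bounded_upd)
    done
qed

lemma levels_exit:
  assumes I: "levels_inv n m"
  shows "prog_runs 15 m 3 44 (levels_inv n)"
proof -
  have v: "m (-2) = nI" "m (-8) = int n" "mem_bounded word_max m" using I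
    unfolding levels_inv_def consts_stored_def by auto
  have b: "fits word_max (nI - int n)" using fits_if_size_le[OF size_le_0] by (simp add: nI_def)
  have nn: "nI - int n = 0" by (simp add: nI_def)
  show ?thesis
    apply (insert v b nn)
    apply (rule runs_to_step, (simp add: prog_exec_simps; fail)+,
      simp del: exec.simps add: prog_exec_simps, (simp only: pc_numeral_simps)?)+
    apply (rule runs_to_done)
     apply (simp add: mem_bounded_upd)
    using I key_addr_pos apply (auto simp: levels_inv_def consts_stored_def mem_bounded_upd)
    done
qed

lemma levels_step:
  assumes j: "j < n" and I: "levels_inv j m"
  shows "prog_runs 15 m (24 + 7 * level (ps ! j)) 15 (levels_inv (Suc j))"
proof -
  have e: "24 + 7 * level (ps ! j) = (12 + (\<Sum>k\<in>{0..<level (ps ! j)}. 7)) + 12" by simp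
  show ?thesis unfolding e
  proof (rule runs_to_trans[OF runs_to_trans[OF level_entry[OF j I]]])
    fix m1 assume "level_inv j 0 m1"
    show "prog_runs 29 m1 (\<Sum>k\<in>{0..<level (ps ! j)}. 7) 29 (level_inv j (level (ps ! j)))"
      by (rule runs_to_loop[where I="level_inv j"]) (use level_step[OF j] \<open>level_inv j 0 m1\<close> in \<open>auto simp: level_inv_def\<close>)
  next
    fix m2 assume "level_inv j (level (ps ! j)) m2"
    then show "prog_runs 29 m2 12 15 (levels_inv (Suc j))" by (rule level_exit[OF j])
  qed
qed

definition "time_levels = (\<Sum>j<n. 24 + 7 * level (ps ! j))"

lemma levels_phase:
  assumes I: "levels_inv 0 m"
  shows "prog_runs 15 m (time_levels + 3) 44 (levels_inv n)"
proof (rule runs_to_trans)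
  show "prog_runs 15 m time_levels 15 (levels_inv n)" unfolding time_levels_def lessThan_atLeast0
    by (rule runs_to_loop[where I=levels_inv]) (use levels_step I in \<open>auto simp: levels_inv_def\<close>)
next
  fix m1 assume "levels_inv n m1" then show "prog_runs 15 m1 3 44 (levels_inv n)"
    by (rule levels_exit)
qed

definition row0_inv :: "nat \<Rightarrow> (int \<Rightarrow> int) \<Rightarrow> bool" where
  "row0_inv k m \<longleftrightarrow> consts_stored m \<and> mem_bounded word_max m \<and> m (-9) = width \<and> m (-8) = int k + 1
    \<and> (\<forall>a. 0 \<le> a \<longrightarrow> a < key_addr \<longrightarrow> m a = mem0 a) \<and> (\<forall>i<n. m (key_addr + int i) = item_key i)
    \<and> (\<forall>K. 0 \<le> K \<longrightarrow> K \<le> int k \<longrightarrow> m (table_addr + K) = min_wt 0 K)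
    \<and> (\<forall>a. table_addr + int k + 1 \<le> a \<longrightarrow> m a = 0)"

lemma row0_entry:
  assumes I: "levels_inv n m"
  shows "prog_runs 44 m 2 46 (row0_inv 0)"
proof -
  have v: "m (-1) = 1" "m (-9) = key_max" "mem_bounded word_max m" using I key_psum_n
    unfolding levels_inv_def consts_stored_def by auto
  have b: "fits word_max (key_max + 1)" "fits word_max 1"
    using fits_if_size_le[OF size_le_width] fits_if_size_le[OF size_le_1] by (auto simp: width_def)
  have z: "m table_addr = 0" using I unfolding levels_inv_def by (simp add: table_addr_eq nI_def)
  show ?thesis
    apply (insert v b)
    apply (rule runs_to_step, (simp add: prog_exec_simps; fail)+,
      simp del: exec.simps add: prog_exec_simps, (simp only: pc_numeral_simps)?)+
    apply (rule runs_to_done)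
     apply (simp add: mem_bounded_upd)
    using I z key_addr_pos nI_pos apply (auto simp: row0_inv_def levels_inv_def consts_stored_def mem_bounded_upd width_def table_addr_eq nI_def)
    done
qed

lemma row0_inv_Suc:
  assumes I: "row0_inv k m"
    and upd: "mem_bounded word_max m'" "\<forall>a. 0 \<le> a \<longrightarrow> a \<noteq> table_addr + (int k + 1) \<longrightarrow> m' a = m a"
    "\<forall>a\<in>{-1,-15,-16,-30,-2,-3,-4,-5,-6,-7,-10,-11,-9}. m' a = m a"
    "m' (-8) = int k + 1 + 1" "m' (table_addr + (int k + 1)) = C + 1"
  shows "row0_inv (Suc k) m'"
proof -
  have TBp: "0 < table_addr" by (rule table_addr_pos)
  have TA: "key_addr < table_addr" using nI_pos by (simp add: table_addr_eq)
  have "consts_stored m'" using I upd unfolding row0_inv_def consts_stored_def by auto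
  moreover have "\<forall>a. 0 \<le> a \<longrightarrow> a < key_addr \<longrightarrow> m' a = mem0 a" using I upd(2) TA unfolding row0_inv_def
    by auto
  moreover have "\<forall>i<n. m' (key_addr + int i) = item_key i" using I upd(2) TA key_addr_pos
    unfolding row0_inv_def by (auto simp: table_addr_eq nI_def)
  moreover have "\<forall>K. 0 \<le> K \<longrightarrow> K \<le> int (Suc k) \<longrightarrow> m' (table_addr + K) = min_wt 0 K"
  proof (intro allI impI)
    fix K assume K: "0 \<le> K" "K \<le> int (Suc k)"
    show "m' (table_addr + K) = min_wt 0 K"
    proof (cases "K = int k + 1")
      case True then show ?thesis using upd(5) by simp
    next
      case False then show ?thesis using I upd(2) K TBp unfolding row0_inv_def by auto
    qed
  qed
  moreover have "\<forall>a. table_addr + int (Suc k) + 1 \<le> a \<longrightarrow> m' a = 0" using I upd(2) TBp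
    unfolding row0_inv_def by auto
  ultimately show ?thesis using I upd unfolding row0_inv_def by auto
qed

lemma row0_step:
  assumes k: "k < nat key_max" and I: "row0_inv k m"
  shows "prog_runs 46 m 6 46 (row0_inv (Suc k))"
proof -
  have v: "m (-1) = 1" "m (-3) = C + 1" "m (-9) = width" "m (-11) = table_addr" "m (-8) = int k + 1"
    "mem_bounded word_max m"
    using I unfolding row0_inv_def consts_stored_def by auto
  have kk: "int k + 1 \<le> key_max" using k by linarith
  have c: "0 < width - (int k + 1)" using kk by (simp add: width_def)
  have TBp: "0 < table_addr" using nI_pos by (simp add: table_addr_def)
  have "size_le 9 (int k + 1)" using size_le_key_max kk unfolding size_le_def by simp
  then have bk: "size_le 10 (int k + 1)" by (rule size_le_mono) simp
  have b: "fits word_max (width - (int k + 1))" "fits word_max (table_addr + (int k + 1))"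
    "fits word_max (C + 1)" "fits word_max (int k + 1 + 1)"
  proof -
    show "fits word_max (width - (int k + 1))"
      by (rule fits_if_size_le[OF size_le_sub'[OF size_le_width bk]]) auto
    show "fits word_max (table_addr + (int k + 1))"
      by (rule fits_if_size_le[OF size_le_add'[OF size_le_mono[OF size_le_table_addr] bk]]) auto
    show "fits word_max (C + 1)"
      by (rule fits_if_size_le[OF size_le_add'[OF size_le_C size_le_1]]) auto
    show "fits word_max (int k + 1 + 1)"
      by (rule fits_if_size_le[OF size_le_add'[OF bk size_le_mono[OF size_le_1]]]) auto
  qed
  have post: "row0_inv (Suc k) m'" if "mem_bounded word_max m'"
    "\<forall>a. 0 \<le> a \<longrightarrow> a \<noteq> table_addr + (int k + 1) \<longrightarrow> m' a = m a"
    "\<forall>a\<in>{-1,-15,-16,-30,-2,-3,-4,-5,-6,-7,-10,-11,-9}. m' a = m a"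
    "m' (-8) = int k + 1 + 1" "m' (table_addr + (int k + 1)) = C + 1" for m'
    using row0_inv_Suc[OF I that] .
  show ?thesis
    apply (insert v b c TBp)
    apply (rule runs_to_step, (simp add: prog_exec_simps; fail)+,
      simp del: exec.simps add: prog_exec_simps, (simp only: pc_numeral_simps)?)+
    apply (rule runs_to_done)
     apply (simp add: mem_bounded_upd)
    apply (rule post)
    apply (auto simp: mem_bounded_upd)
    done
qed

definition table_pre :: "(int \<Rightarrow> int) \<Rightarrow> bool" where
  "table_pre m \<longleftrightarrow> consts_stored m \<and> mem_bounded word_max m \<and> m (-9) = width
    \<and> (\<forall>a. 0 \<le> a \<longrightarrow> a < key_addr \<longrightarrow> m a = mem0 a) \<and> (\<forall>i<n. m (key_addr + int i) = item_key i)
    \<and> (\<forall>K. 0 \<le> K \<longrightarrow> K < width \<longrightarrow> m (table_addr + K) = min_wt 0 K)"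

lemma row0_exit:
  assumes I: "row0_inv (nat key_max) m"
  shows "prog_runs 46 m 3 53 table_pre"
proof -
  have v: "m (-9) = width" "m (-8) = key_max + 1" "mem_bounded word_max m" using I key_max_nonneg
    unfolding row0_inv_def consts_stored_def by auto
  have c: "width - (key_max + 1) = 0" by (simp add: width_def)
  have b: "fits word_max 0" using fits_if_size_le[OF size_le_0] by simp
  show ?thesis
    apply (insert v b c)
    apply (rule runs_to_step, (simp add: prog_exec_simps; fail)+,
      simp del: exec.simps add: prog_exec_simps, (simp only: pc_numeral_simps)?)+
    apply (rule runs_to_done)
     apply (simp add: mem_bounded_upd)
    using I key_max_nonneg key_addr_pos nI_pos apply (auto simp: table_pre_def row0_inv_def consts_stored_def mem_bounded_upd width_def table_addr_eq)
    done
qed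

lemma row0_phase:
  assumes I: "levels_inv n m"
  shows "prog_runs 44 m (2 + 6 * nat key_max + 3) 53 table_pre"
proof -
  have e: "2 + 6 * nat key_max + 3 = 2 + (\<Sum>k\<in>{0..<nat key_max}. 6) + 3" by simp
  show ?thesis unfolding e
  proof (rule runs_to_trans[OF runs_to_trans[OF row0_entry[OF I]]])
    fix m1 assume "row0_inv 0 m1"
    show "prog_runs 46 m1 (\<Sum>k\<in>{0..<nat key_max}. 6) 46 (row0_inv (nat key_max))"
      by (rule runs_to_loop[where I=row0_inv]) (use row0_step \<open>row0_inv 0 m1\<close> in \<open>auto simp: row0_inv_def\<close>)
  next
    fix m2 assume "row0_inv (nat key_max) m2" then show "prog_runs 46 m2 3 53 table_pre"
      by (rule row0_exit)
  qed
qed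

definition table_inv :: "nat \<Rightarrow> (int \<Rightarrow> int) \<Rightarrow> bool" where
  "table_inv r m \<longleftrightarrow> consts_stored m \<and> mem_bounded word_max m \<and> m (-9) = width \<and> m (-8) = int r + 1 \<and> m (-25) = table_addr + int r * width
    \<and> (\<forall>a. 0 \<le> a \<longrightarrow> a < key_addr \<longrightarrow> m a = mem0 a) \<and> (\<forall>i<n. m (key_addr + int i) = item_key i)
    \<and> (\<forall>j'\<le>r. \<forall>K. 0 \<le> K \<longrightarrow> K < width \<longrightarrow> m (table_addr + int j' * width + K) = min_wt j' K)"

lemma table_entry:
  assumes I: "table_pre m"
  shows "prog_runs 53 m 2 55 (table_inv 0)"
proof -
  have v: "m (-30) = 0" "m (-11) = table_addr" "mem_bounded word_max m" using I
    unfolding table_pre_def consts_stored_def by auto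
  have b: "fits word_max 1" "fits word_max table_addr"
    using fits_if_size_le[OF size_le_1] fits_if_size_le[OF size_le_table_addr] by auto
  show ?thesis
    apply (insert v b)
    apply (rule runs_to_step, (simp add: prog_exec_simps; fail)+,
      simp del: exec.simps add: prog_exec_simps, (simp only: pc_numeral_simps)?)+
    apply (rule runs_to_done)
     apply (simp add: mem_bounded_upd)
    using I table_addr_pos key_addr_pos apply (auto simp: table_pre_def table_inv_def consts_stored_def mem_bounded_upd)
    done
qed

definition row_inv :: "nat \<Rightarrow> nat \<Rightarrow> (int \<Rightarrow> int) \<Rightarrow> bool" where
  "row_inv r K m \<longleftrightarrow> consts_stored m \<and> mem_bounded word_max m \<and> m (-9) = width \<and> m (-8) = int r + 1 \<and> m (-25) = table_addr + int r * width
    \<and> (\<forall>a. 0 \<le> a \<longrightarrow> a < key_addr \<longrightarrow> m a = mem0 a) \<and> (\<forall>i<n. m (key_addr + int i) = item_key i)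
    \<and> (\<forall>j'\<le>r. \<forall>K. 0 \<le> K \<longrightarrow> K < width \<longrightarrow> m (table_addr + int j' * width + K) = min_wt j' K)
    \<and> m (-26) = item_key r \<and> m (-27) = ws ! r \<and> m (-28) = int K
    \<and> (\<forall>K'. 0 \<le> K' \<longrightarrow> K' < int K \<longrightarrow> m (table_addr + int r * width + width + K') = min_wt (Suc r) K')"

lemma row_inv_0:
  assumes I: "table_inv r m"
    and upd: "mem_bounded word_max m'" "\<forall>a. 0 \<le> a \<longrightarrow> m' a = m a"
    "\<forall>a\<in>{-1,-15,-16,-30,-2,-3,-4,-5,-6,-7,-10,-11,-8,-9,-25}. m' a = m a"
    "m' (-26) = item_key r" "m' (-27) = ws ! r" "m' (-28) = 0"
  shows "row_inv r 0 m'"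
proof -
  have "consts_stored m'" using I upd unfolding table_inv_def consts_stored_def by auto
  moreover have "\<forall>i<n. m' (key_addr + int i) = item_key i" using I upd(2) key_addr_pos
    unfolding table_inv_def by auto
  moreover have "\<forall>j'\<le>r. \<forall>K. 0 \<le> K \<longrightarrow> K < width \<longrightarrow> m' (table_addr + int j' * width + K) = min_wt j' K"
  proof (intro allI impI)
    fix j' K assume a: "j' \<le> r" "0 \<le> K" "K < width"
    have "0 \<le> table_addr + int j' * width + K" using table_addr_pos row_offset_nonneg[of j'] a
      by linarith
    then show "m' (table_addr + int j' * width + K) = min_wt j' K" using upd(2) I a
      unfolding table_inv_def by auto
  qed
  ultimately show ?thesis using I upd unfolding table_inv_def row_inv_def by auto
qed

lemma row_entry:
  assumes r: "r < n" and I: "table_inv r m"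
  shows "prog_runs 55 m 8 64 (row_inv r 0)"
proof -
  have v: "m (-1) = 1" "m (-7) = nI + 1" "m (-10) = key_addr" "m (-8) = int r + 1"
    "mem_bounded word_max m"
    using I unfolding table_inv_def consts_stored_def by auto
  have A: "0 < key_addr" by (rule key_addr_pos)
  have d: "m (key_addr + int r) = item_key r" using I r unfolding table_inv_def by auto
  have w: "m (int r + 1 + (int r + 1)) = ws ! r"
  proof -
    have "int r + 1 + (int r + 1) < key_addr" using r by (simp add: key_addr_def nI_def)
    then have "m (int r + 1 + (int r + 1)) = mem0 (int r + 1 + (int r + 1))" using I
      unfolding table_inv_def by auto
    moreover have "int r + 1 + (int r + 1) = 2 * int r + 2" by simp
    ultimately show ?thesis using mem0_weight[OF r] by simp
  qed
  have c: "0 < nI + 1 - (int r + 1)" using r by (simp add: nI_def)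
  have rr: "r \<le> n" using r by simp
  have b: "fits word_max (nI + 1 - (int r + 1))" "fits word_max (key_addr + (int r + 1))"
    "fits word_max (key_addr + (int r + 1) - 1)"
    "fits word_max (item_key r)" "fits word_max (int r + 1 + (int r + 1))" "fits word_max (ws ! r)"
      "fits word_max 0"
  proof -
    have r1: "size_le 2 (int r + 1)" by (rule size_le_add'[OF size_le_j[OF rr] size_le_1]) auto
    show "fits word_max (nI + 1 - (int r + 1))"
      by (rule fits_if_size_le[OF size_le_sub'[OF size_le_add'[OF size_le_nI size_le_1] r1]]) auto
    have a: "size_le 4 (key_addr + (int r + 1))"
      by (rule size_le_add'[OF size_le_key_addr size_le_mono[OF r1]]) auto
    show "fits word_max (key_addr + (int r + 1))" by (rule fits_if_size_le[OF a]) auto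
    show "fits word_max (key_addr + (int r + 1) - 1)"
      by (rule fits_if_size_le[OF size_le_sub'[OF a size_le_mono[OF size_le_1]]]) auto
    show "fits word_max (item_key r)" by (rule fits_if_size_le[OF size_le_item_key[OF r]]) auto
    show "fits word_max (int r + 1 + (int r + 1))"
      by (rule fits_if_size_le[OF size_le_add'[OF r1 r1]]) auto
    show "fits word_max (ws ! r)" by (rule fits_if_size_le[OF size_le_w[OF r]]) auto
    show "fits word_max 0" by (rule fits_if_size_le[OF size_le_0]) auto
  qed
  have post: "row_inv r 0 m'" if "mem_bounded word_max m'" "\<forall>a. 0 \<le> a \<longrightarrow> m' a = m a"
    "\<forall>a\<in>{-1,-15,-16,-30,-2,-3,-4,-5,-6,-7,-10,-11,-8,-9,-25}. m' a = m a"
    "m' (-26) = item_key r" "m' (-27) = ws ! r" "m' (-28) = 0" for m'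
    using row_inv_0[OF I that] .
  show ?thesis
    apply (insert v b c d w A)
    apply (rule runs_to_step, (simp add: prog_exec_simps; fail)+,
      simp del: exec.simps add: prog_exec_simps, (simp only: pc_numeral_simps)?)+
    apply (rule runs_to_done)
     apply (simp add: mem_bounded_upd)
    apply (rule post)
    apply (auto simp: mem_bounded_upd)
    done
qed

lemma row_step_fits:
  assumes r: "r < n" and KL: "int K < width"
  shows "fits word_max (width - int K)" "fits word_max (table_addr + int r * width + int K)"
    "fits word_max (min_wt r (int K))"
    "fits word_max (int K - item_key r)" "fits word_max (int K - item_key r + 1)"
      "fits word_max (table_addr + int r * width + int K - item_key r)"
    "fits word_max (min_wt r (int K - item_key r))"
      "fits word_max (min_wt r (int K - item_key r) + ws ! r)"
    "fits word_max (min_wt r (int K) - (min_wt r (int K - item_key r) + ws ! r))"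
    "fits word_max (table_addr + int r * width + width)"
      "fits word_max (table_addr + int r * width + width + int K)" "fits word_max (int K + 1)"
proof -
  have rr: "r \<le> n" using r by simp
  have bK: "size_le 10 (int K)" using size_le_width KL unfolding size_le_def by simp
  have ra: "size_le 12 (table_addr + int r * width)"
    by (rule size_le_add'[OF size_le_mono[OF size_le_table_addr] size_le_rowaddr[OF rr]]) auto
  have ad: "size_le 13 (table_addr + int r * width + int K)"
    by (rule size_le_add'[OF ra size_le_mono[OF bK]]) auto
  have bw: "size_le 3 (min_wt r (int K - item_key r) + ws ! r)"
    by (rule size_le_add'[OF size_le_min_wt[OF rr] size_le_mono[OF size_le_w[OF r]]]) auto
  show "fits word_max (width - int K)"
    by (rule fits_if_size_le[OF size_le_sub'[OF size_le_width bK]]) auto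
  show "fits word_max (table_addr + int r * width + int K)" by (rule fits_if_size_le[OF ad]) auto
  show "fits word_max (min_wt r (int K))" by (rule fits_if_size_le[OF size_le_min_wt[OF rr]]) auto
  have kd: "size_le 11 (int K - item_key r)"
    by (rule size_le_sub'[OF bK size_le_mono[OF size_le_item_key[OF r]]]) auto
  show "fits word_max (int K - item_key r)" by (rule fits_if_size_le[OF kd]) auto
  show "fits word_max (int K - item_key r + 1)"
    by (rule fits_if_size_le[OF size_le_add'[OF kd size_le_mono[OF size_le_1]]]) auto
  show "fits word_max (table_addr + int r * width + int K - item_key r)"
    by (rule fits_if_size_le[OF size_le_sub'[OF ad size_le_mono[OF size_le_item_key[OF r]]]]) auto
  show "fits word_max (min_wt r (int K - item_key r))"
    by (rule fits_if_size_le[OF size_le_min_wt[OF rr]]) auto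
  show "fits word_max (min_wt r (int K - item_key r) + ws ! r)"
    by (rule fits_if_size_le[OF bw]) auto
  show "fits word_max (min_wt r (int K) - (min_wt r (int K - item_key r) + ws ! r))"
    by (rule fits_if_size_le[OF size_le_sub'[OF size_le_mono[OF size_le_min_wt[OF rr]] bw]]) auto
  have x: "size_le 13 (table_addr + int r * width + width)"
    by (rule size_le_add'[OF ra size_le_mono[OF size_le_width]]) auto
  show "fits word_max (table_addr + int r * width + width)" by (rule fits_if_size_le[OF x]) auto
  show "fits word_max (table_addr + int r * width + width + int K)"
    by (rule fits_if_size_le[OF size_le_add'[OF x size_le_mono[OF bK]]]) auto
  show "fits word_max (int K + 1)"
    by (rule fits_if_size_le[OF size_le_add'[OF bK size_le_mono[OF size_le_1]]]) auto
qed

lemma row_inv_Suc: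
  assumes I: "row_inv r K m" and upd: "mem_bounded word_max m'"
    "\<forall>a. 0 \<le> a \<longrightarrow> a \<noteq> table_addr + int r * width + width + int K \<longrightarrow> m' a = m a"
    "\<forall>a\<in>{-1,-15,-16,-30,-2,-3,-4,-5,-6,-7,-10,-11,-8,-9,-25,-26,-27}. m' a = m a"
    "m' (-28) = int K + 1"
      "m' (table_addr + int r * width + width + int K) = min_wt (Suc r) (int K)"
  shows "row_inv r (Suc K) m'"
proof -
  have nn: "0 \<le> int r * width" "0 < table_addr" using row_offset_nonneg table_addr_pos by auto
  have X: "table_addr \<le> table_addr + int r * width + width + int K" using nn width_pos by linarith
  have TA: "key_addr < table_addr" using nI_pos by (simp add: table_addr_eq)
  have "consts_stored m'" using I upd unfolding row_inv_def consts_stored_def by auto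
  moreover have "\<forall>a. 0 \<le> a \<longrightarrow> a < key_addr \<longrightarrow> m' a = mem0 a" using I upd(2) X TA unfolding row_inv_def
    by auto
  moreover have "\<forall>i<n. m' (key_addr + int i) = item_key i"
  proof (intro allI impI)
    fix i assume i: "i < n"
    have "key_addr + int i < table_addr" using i by (simp add: table_addr_eq nI_def)
    then show "m' (key_addr + int i) = item_key i" using upd(2) I i key_addr_pos X
      unfolding row_inv_def by auto
  qed
  moreover have "\<forall>j'\<le>r. \<forall>K. 0 \<le> K \<longrightarrow> K < width \<longrightarrow> m' (table_addr + int j' * width + K) = min_wt j' K"
  proof (intro allI impI)
    fix j' K0 assume a: "j' \<le> r" "0 \<le> K0" "K0 < width"
    have "0 \<le> table_addr + int j' * width + K0" using table_addr_pos row_offset_nonneg[of j'] a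
      by linarith
    moreover have "table_addr + int j' * width + K0 \<noteq> table_addr + int r * width + width + int K"
      using cell_addr_less[OF a(1) a(3), of "int K"] by simp
    ultimately show "m' (table_addr + int j' * width + K0) = min_wt j' K0" using upd(2) I a
      unfolding row_inv_def by auto
  qed
  moreover have "\<forall>K'. 0 \<le> K' \<longrightarrow> K' < int (Suc K) \<longrightarrow> m' (table_addr + int r * width + width + K') = min_wt (Suc r) K'"
  proof (intro allI impI)
    fix K' assume a: "0 \<le> K'" "K' < int (Suc K)"
    show "m' (table_addr + int r * width + width + K') = min_wt (Suc r) K'"
    proof (cases "K' = int K")
      case True then show ?thesis using upd(5) by simp
    next
      case False
      then have "K' < int K" using a by simp
      moreover have "0 \<le> table_addr + int r * width + width + K'" using nn width_pos a by linarith
      ultimately show ?thesis using upd(2) I a False unfolding row_inv_def by auto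
    qed
  qed
  ultimately show ?thesis using I upd unfolding row_inv_def by auto
qed

lemma row_step:
  assumes r: "r < n" and K: "K < nat width" and I: "row_inv r K m"
  shows "prog_runs 64 m 18 64 (row_inv r (Suc K))"
proof -
  define rb where "rb = table_addr + int r * width"
  have rbp: "0 < rb" unfolding rb_def using row_offset_nonneg[of r] table_addr_pos by linarith
  have v: "m (-1) = 1" "m (-9) = width" "m (-25) = rb" "m (-26) = item_key r" "m (-27) = ws ! r"
    "m (-28) = int K" "m (-30) = 0" "mem_bounded word_max m"
    using I unfolding row_inv_def consts_stored_def rb_def by auto
  have KL: "int K < width" using K by linarith
  have a: "m (rb + int K) = min_wt r (int K)" using I KL unfolding row_inv_def rb_def by auto
  have c0: "0 < width - int K" using KL by simp
  note b = row_step_fits[OF r KL, folded rb_def]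
  have post: "row_inv r (Suc K) m'" if "mem_bounded word_max m'"
    "\<forall>a. 0 \<le> a \<longrightarrow> a \<noteq> rb + width + int K \<longrightarrow> m' a = m a"
    "\<forall>a\<in>{-1,-15,-16,-30,-2,-3,-4,-5,-6,-7,-10,-11,-8,-9,-25,-26,-27}. m' a = m a"
    "m' (-28) = int K + 1" "m' (rb + width + int K) = min_wt (Suc r) (int K)" for m'
    using row_inv_Suc[OF I that[unfolded rb_def]] .
  show ?thesis
  proof (cases "item_key r \<le> int K")
    case False
    then have c1: "\<not> 0 < int K - item_key r + 1" by simp
    have val: "min_wt (Suc r) (int K) = min_wt r (int K)" using False by simp
    show ?thesis
      apply (rule runs_to_mono[where T=13 and Q="row_inv r (Suc K)"])
        prefer 2 apply simp
       prefer 2 apply assumption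
      apply (insert v a c0 rbp b c1 val)
      apply (rule runs_to_step, (simp add: prog_exec_simps; fail)+,
      simp del: exec.simps add: prog_exec_simps, (simp only: pc_numeral_simps)?)+
      apply (rule runs_to_done)
       apply (simp add: mem_bounded_upd)
      apply (rule post)
      apply (auto simp: mem_bounded_upd)
      done
  next
    case True
    then have c1: "0 < int K - item_key r + 1" by simp
    have a2: "m (rb + int K - item_key r) = min_wt r (int K - item_key r)"
    proof -
      have "0 \<le> int K - item_key r" "int K - item_key r < width" using True KL item_key_nonneg[of r]
        by auto
      then have "m (table_addr + int r * width + (int K - item_key r)) = min_wt r (int K - item_key r)"
        using I unfolding row_inv_def by auto
      then show ?thesis by (simp add: algebra_simps rb_def)
    qed
    show ?thesis
    proof (cases "0 < min_wt r (int K) - (min_wt r (int K - item_key r) + ws ! r)")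
      case True2: True
      have val: "min_wt (Suc r) (int K) = min_wt r (int K - item_key r) + ws ! r" using True True2
        by simp
      show ?thesis
        apply (insert v a a2 c0 rbp b c1 val True2)
        apply (rule runs_to_step, (simp add: prog_exec_simps; fail)+,
      simp del: exec.simps add: prog_exec_simps, (simp only: pc_numeral_simps)?)+
        apply (rule runs_to_done)
         apply (simp add: mem_bounded_upd)
        apply (rule post)
        apply (auto simp: mem_bounded_upd)
        done
    next
      case False2: False
      have val: "min_wt (Suc r) (int K) = min_wt r (int K)" using True False2 by simp
      show ?thesis
        apply (insert v a a2 c0 rbp b c1 val False2)
        apply (rule runs_to_step, (simp add: prog_exec_simps; fail)+,
      simp del: exec.simps add: prog_exec_simps, (simp only: pc_numeral_simps)?)+
        apply (rule runs_to_done)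
         apply (simp add: mem_bounded_upd)
        apply (rule post)
        apply (auto simp: mem_bounded_upd)
        done
    qed
  qed
qed

lemma table_inv_Suc:
  fixes r :: nat
  defines "rb \<equiv> table_addr + int r * width"
  assumes I: "row_inv r (nat width) m"
    and upd: "mem_bounded word_max m'" "\<forall>a. 0 \<le> a \<longrightarrow> m' a = m a"
    "\<forall>a\<in>{-1,-15,-16,-30,-2,-3,-4,-5,-6,-7,-10,-11,-9}. m' a = m a"
    "m' (-8) = int r + 1 + 1" "m' (-25) = rb + width"
  shows "table_inv (Suc r) m'"
proof -
  have "consts_stored m'" using I upd unfolding row_inv_def consts_stored_def by auto
  moreover have "\<forall>a. 0 \<le> a \<longrightarrow> a < key_addr \<longrightarrow> m' a = mem0 a" using I upd(2) unfolding row_inv_def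
    by auto
  moreover have "\<forall>i<n. m' (key_addr + int i) = item_key i" using I upd(2) key_addr_pos
    unfolding row_inv_def by auto
  moreover have "\<forall>j'\<le>Suc r. \<forall>K. 0 \<le> K \<longrightarrow> K < width \<longrightarrow> m' (table_addr + int j' * width + K) = min_wt j' K"
  proof (intro allI impI)
    fix j' K assume a: "j' \<le> Suc r" "0 \<le> K" "K < width"
    have nn: "0 \<le> table_addr + int j' * width + K" using table_addr_pos row_offset_nonneg[of j'] a
      by linarith
    show "m' (table_addr + int j' * width + K) = min_wt j' K"
    proof (cases "j' = Suc r")
      case True
      have eq: "table_addr + int j' * width + K = table_addr + int r * width + width + K" using True
        by (simp add: algebra_simps)
      have "K < int (nat width)" using a width_pos by simp
      then have w: "m (table_addr + int r * width + width + K) = min_wt (Suc r) K" using I a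
        unfolding row_inv_def by auto
      have "m' (table_addr + int j' * width + K) = m' (table_addr + int r * width + width + K)"
        by (simp only: eq)
      also have "\<dots> = m (table_addr + int r * width + width + K)" using upd(2) nn eq by simp
      also have "\<dots> = min_wt (Suc r) K" by (rule w)
      finally show ?thesis using True by (simp only:)
    next
      case False
      then have "j' \<le> r" using a by simp
      then show ?thesis using I upd(2) nn a unfolding row_inv_def by auto
    qed
  qed
  moreover have "m' (-25) = table_addr + int (Suc r) * width" using upd(5)
    by (simp add: rb_def algebra_simps)
  moreover have "m' (-8) = int (Suc r) + 1" using upd(4) by simp
  ultimately show ?thesis using I upd unfolding row_inv_def table_inv_def by auto
qed

lemma row_exit:
  assumes r: "r < n" and I: "row_inv r (nat width) m"
  shows "prog_runs 64 m 5 55 (table_inv (Suc r))"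
proof -
  define rb where "rb = table_addr + int r * width"
  have v: "m (-1) = 1" "m (-9) = width" "m (-25) = rb" "m (-28) = width" "m (-8) = int r + 1"
    "mem_bounded word_max m"
    using I width_pos unfolding row_inv_def consts_stored_def rb_def by auto
  have rr: "r \<le> n" using r by simp
  have b: "fits word_max 0" "fits word_max (rb + width)" "fits word_max (int r + 1 + 1)"
  proof -
    show "fits word_max 0" by (rule fits_if_size_le[OF size_le_0]) auto
    have ra: "size_le 12 rb" unfolding rb_def
      by (rule size_le_add'[OF size_le_mono[OF size_le_table_addr] size_le_rowaddr[OF rr]]) auto
    show "fits word_max (rb + width)"
      by (rule fits_if_size_le[OF size_le_add'[OF ra size_le_mono[OF size_le_width]]]) auto
    have r1: "size_le 2 (int r + 1)" by (rule size_le_add'[OF size_le_j[OF rr] size_le_1]) auto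
    show "fits word_max (int r + 1 + 1)"
      by (rule fits_if_size_le[OF size_le_add'[OF r1 size_le_mono[OF size_le_1]]]) auto
  qed
  have post: "table_inv (Suc r) m'" if "mem_bounded word_max m'" "\<forall>a. 0 \<le> a \<longrightarrow> m' a = m a"
    "\<forall>a\<in>{-1,-15,-16,-30,-2,-3,-4,-5,-6,-7,-10,-11,-9}. m' a = m a"
    "m' (-8) = int r + 1 + 1" "m' (-25) = rb + width" for m'
    using table_inv_Suc[OF I that[unfolded rb_def]] .
  show ?thesis
    apply (insert v b)
    apply (rule runs_to_step, (simp add: prog_exec_simps; fail)+,
      simp del: exec.simps add: prog_exec_simps, (simp only: pc_numeral_simps)?)+
    apply (rule runs_to_done)
     apply (simp add: mem_bounded_upd)
    apply (rule post)
    apply (auto simp: mem_bounded_upd)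
    done
qed

definition table_done :: "(int \<Rightarrow> int) \<Rightarrow> bool" where
  "table_done m \<longleftrightarrow> consts_stored m \<and> mem_bounded word_max m \<and> m (-9) = width \<and> m (-25) = table_addr + nI * width
    \<and> (\<forall>i<n. m (key_addr + int i) = item_key i)
    \<and> (\<forall>j'\<le>n. \<forall>K. 0 \<le> K \<longrightarrow> K < width \<longrightarrow> m (table_addr + int j' * width + K) = min_wt j' K)"

lemma table_exit:
  assumes I: "table_inv n m"
  shows "prog_runs 55 m 3 87 table_done"
proof -
  have v: "m (-7) = nI + 1" "m (-8) = nI + 1" "mem_bounded word_max m" using I
    unfolding table_inv_def consts_stored_def by (auto simp: nI_def)
  have b: "fits word_max (nI + 1 - (nI + 1))" using fits_if_size_le[OF size_le_0] by simp
  have post: "table_done m'" if "mem_bounded word_max m'" "\<forall>a. 0 \<le> a \<longrightarrow> m' a = m a"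
    "\<forall>a\<in>{-1,-15,-16,-30,-2,-3,-4,-5,-6,-7,-10,-11,-9,-25}. m' a = m a" for m'
  proof -
    have "consts_stored m'" using I that unfolding table_inv_def consts_stored_def by auto
    moreover have "\<forall>i<n. m' (key_addr + int i) = item_key i" using I that(2) key_addr_pos
      unfolding table_inv_def by auto
    moreover have "\<forall>j'\<le>n. \<forall>K. 0 \<le> K \<longrightarrow> K < width \<longrightarrow> m' (table_addr + int j' * width + K) = min_wt j' K"
    proof (intro allI impI)
      fix j' K assume a: "j' \<le> n" "0 \<le> K" "K < width"
      have nn: "0 \<le> table_addr + int j' * width + K" using table_addr_pos row_offset_nonneg[of j'] a
        by linarith
      then show "m' (table_addr + int j' * width + K) = min_wt j' K" using I that(2) a
        unfolding table_inv_def by auto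
    qed
    ultimately show ?thesis using I that unfolding table_inv_def table_done_def
      by (auto simp: nI_def)
  qed
  show ?thesis
    apply (insert v b)
    apply (rule runs_to_step, (simp add: prog_exec_simps; fail)+,
      simp del: exec.simps add: prog_exec_simps, (simp only: pc_numeral_simps)?)+
    apply (rule runs_to_done)
     apply (simp add: mem_bounded_upd)
    apply (rule post)
    apply (auto simp: mem_bounded_upd)
    done
qed

lemma table_step:
  assumes r: "r < n" and I: "table_inv r m"
  shows "prog_runs 55 m (8 + 18 * nat width + 5) 55 (table_inv (Suc r))"
proof -
  have e: "8 + 18 * nat width + 5 = (8 + (\<Sum>k\<in>{0..<nat width}. 18)) + 5" by simp
  show ?thesis unfolding e
  proof (rule runs_to_trans[OF runs_to_trans[OF row_entry[OF r I]]])
    fix m1 assume "row_inv r 0 m1"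
    show "prog_runs 64 m1 (\<Sum>k\<in>{0..<nat width}. 18) 64 (row_inv r (nat width))"
      by (rule runs_to_loop[where I="row_inv r"]) (use row_step[OF r] \<open>row_inv r 0 m1\<close> in \<open>auto simp: row_inv_def\<close>)
  next
    fix m2 assume "row_inv r (nat width) m2"
    then show "prog_runs 64 m2 5 55 (table_inv (Suc r))" by (rule row_exit[OF r])
  qed
qed

lemma table_phase:
  assumes I: "table_pre m"
  shows "prog_runs 53 m (2 + n * (13 + 18 * nat width) + 3) 87 table_done"
proof -
  have e: "2 + n * (13 + 18 * nat width) + 3 = (2 + (\<Sum>r\<in>{0..<n}. 8 + 18 * nat width + 5)) + 3"
    by simp
  show ?thesis unfolding e
  proof (rule runs_to_trans[OF runs_to_trans[OF table_entry[OF I]]])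
    fix m1 assume "table_inv 0 m1"
    show "prog_runs 55 m1 (\<Sum>r\<in>{0..<n}. 8 + 18 * nat width + 5) 55 (table_inv n)"
      by (rule runs_to_loop[where I=table_inv]) (use table_step \<open>table_inv 0 m1\<close> in \<open>auto simp: table_inv_def\<close>)
  next
    fix m2 assume "table_inv n m2" then show "prog_runs 55 m2 3 87 table_done" by (rule table_exit)
  qed
qed

lemma table_done_frame:
  assumes I: "table_done m"
    and upd: "mem_bounded word_max m'" "\<forall>a. 0 \<le> a \<longrightarrow> m' a = m a"
    "\<forall>a\<in>{-1,-15,-16,-30,-2,-3,-4,-5,-6,-7,-10,-11,-9,-25}. m' a = m a"
  shows "table_done m'"
proof -
  have "consts_stored m'" using I upd unfolding table_done_def consts_stored_def by auto
  moreover have "\<forall>i<n. m' (key_addr + int i) = item_key i" using I upd(2) key_addr_pos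
    unfolding table_done_def by auto
  moreover have "\<forall>j'\<le>n. \<forall>K. 0 \<le> K \<longrightarrow> K < width \<longrightarrow> m' (table_addr + int j' * width + K) = min_wt j' K"
  proof (intro allI impI)
    fix j' K assume a: "j' \<le> n" "0 \<le> K" "K < width"
    have nn: "0 \<le> table_addr + int j' * width + K" using table_addr_pos row_offset_nonneg[of j'] a
      by linarith
    then show "m' (table_addr + int j' * width + K) = min_wt j' K" using I upd(2) a
      unfolding table_done_def by auto
  qed
  ultimately show ?thesis using I upd unfolding table_done_def by auto
qed

definition scan_inv :: "nat \<Rightarrow> (int \<Rightarrow> int) \<Rightarrow> bool" where
  "scan_inv i m \<longleftrightarrow> table_done m \<and> m (-28) = key_max - int i"

lemma scan_entry:
  assumes I: "table_done m"
  shows "prog_runs 87 m 1 88 (scan_inv 0)"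
proof -
  have v: "m (-9) = width" "m (-1) = 1" "mem_bounded word_max m" using I
    unfolding table_done_def consts_stored_def by auto
  have "width - 1 = key_max" by (simp add: width_def)
  then have b: "fits word_max (width - 1)" using fits_if_size_le[OF size_le_key_max] by simp
  show ?thesis
    apply (insert v b)
    apply (rule runs_to_step, (simp add: prog_exec_simps; fail)+,
      simp del: exec.simps add: prog_exec_simps, (simp only: pc_numeral_simps)?)+
    apply (rule runs_to_done)
     apply (simp add: mem_bounded_upd)
    apply (simp add: scan_inv_def)
    apply (rule conjI)
     apply (rule table_done_frame[OF I])
       apply (auto simp: mem_bounded_upd width_def)
    done
qed

lemma scan_fits:
  assumes K: "0 \<le> K" "K \<le> key_max"
  shows "fits word_max (table_addr + nI * width + K)" "fits word_max (min_wt n K)"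
    "fits word_max (C + 1 - min_wt n K)" "fits word_max (K div (nI + 1))"
    "fits word_max (K div (nI + 1) * (nI + 1))" "fits word_max (K - K div (nI + 1) * (nI + 1))"
    "fits word_max ((K - K div (nI + 1) * (nI + 1)) div 2)"
    "fits word_max ((K - K div (nI + 1) * (nI + 1)) div 2 * 2)"
    "fits word_max ((K - K div (nI + 1) * (nI + 1)) - (K - K div (nI + 1) * (nI + 1)) div 2 * 2)"
    "fits word_max (K - 1)"
proof -
  have bK: "size_le 9 K" using size_le_key_max K unfolding size_le_def by simp
  have ra: "size_le 12 (table_addr + nI * width)"
    using size_le_rowaddr[of n]
      by (intro size_le_add'[OF size_le_mono[OF size_le_table_addr]]) (auto simp: nI_def)
  have "0 < nI + 1" "(0::int) < 2" using nI_pos by simp_all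
  note mf = nonneg_div_mod_bounds[OF K(1) this(1)]
  note mf2 = nonneg_div_mod_bounds[OF mf(5) \<open>(0::int) < 2\<close>]
  have bm: "size_le 9 (K mod (nI + 1))" by (rule size_le_between[OF mf(5,6) bK])
  show "fits word_max (table_addr + nI * width + K)"
    by (rule fits_if_size_le[OF size_le_add'[OF ra size_le_mono[OF bK]]]) auto
  show "fits word_max (min_wt n K)" by (rule fits_if_size_le[OF size_le_min_wt]) auto
  show "fits word_max (C + 1 - min_wt n K)"
    by (rule fits_if_size_le[OF size_le_sub'[OF size_le_add'[OF size_le_C size_le_1] size_le_min_wt]]) auto
  show "fits word_max (K div (nI + 1))"
    by (rule fits_if_size_le[OF size_le_between[OF mf(1,2) bK]]) auto
  show "fits word_max (K div (nI + 1) * (nI + 1))"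
    by (rule fits_if_size_le[OF size_le_between[OF mf(3,4) bK]]) auto
  show "fits word_max (K - K div (nI + 1) * (nI + 1))"
    unfolding minus_div_mult_eq_mod by (rule fits_if_size_le[OF bm]) auto
  show "fits word_max ((K - K div (nI + 1) * (nI + 1)) div 2)"
    unfolding minus_div_mult_eq_mod
      by (rule fits_if_size_le[OF size_le_between[OF mf2(1,2) bm]]) auto
  show "fits word_max ((K - K div (nI + 1) * (nI + 1)) div 2 * 2)"
    unfolding minus_div_mult_eq_mod
      by (rule fits_if_size_le[OF size_le_between[OF mf2(3,4) bm]]) auto
  show "fits word_max ((K - K div (nI + 1) * (nI + 1)) - (K - K div (nI + 1) * (nI + 1)) div 2 * 2)"
    unfolding minus_div_mult_eq_mod
      by (rule fits_if_size_le[OF size_le_between[OF mf2(5,6) bm]]) auto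
  show "fits word_max (K - 1)"
    by (rule fits_if_size_le[OF size_le_sub'[OF bK size_le_mono[OF size_le_1]]]) auto
qed

lemma scan_step:
  assumes i: "i < nat (key_max - best_key)" and I: "scan_inv i m"
  shows "prog_runs 88 m 13 88 (scan_inv (Suc i))"
proof -
  define K where "K = key_max - int i"
  define rb where "rb = table_addr + nI * width"
  have v: "m (-1) = 1" "m (-3) = C + 1" "m (-7) = nI + 1" "m (-15) = 2" "m (-25) = rb" "m (-28) = K"
    "mem_bounded word_max m"
    using I unfolding scan_inv_def table_done_def consts_stored_def K_def rb_def by auto
  have K0: "best_key < K" "K \<le> key_max" using i by (auto simp: K_def)
  have Kn: "0 \<le> K" "K < width" using K0 best_key_props(2) by (auto simp: width_def)
  have ng: "\<not> admissible K" using best_key_props(4)[of K] K0 Kn by auto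
  have rbp: "0 < rb" unfolding rb_def using row_offset_nonneg[of n] table_addr_pos
    by (simp add: nI_def)
  have a: "m (rb + K) = min_wt n K" using I Kn unfolding scan_inv_def table_done_def rb_def
    by (auto simp: nI_def)
  note b = scan_fits[OF Kn(1) K0(2), folded rb_def]
  have post: "scan_inv (Suc i) m'" if "mem_bounded word_max m'" "\<forall>a. 0 \<le> a \<longrightarrow> m' a = m a"
    "\<forall>a\<in>{-1,-15,-16,-30,-2,-3,-4,-5,-6,-7,-10,-11,-9,-25}. m' a = m a" "m' (-28) = K - 1" for m'
  proof -
    have "table_done m'" using table_done_frame I that unfolding scan_inv_def by blast
    then show ?thesis using that(4) unfolding scan_inv_def K_def by simp
  qed
  show ?thesis
  proof (cases "min_wt n K \<le> C")
    case False
    then have c: "\<not> 0 < C + 1 - min_wt n K" by simp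
    show ?thesis
      apply (rule runs_to_mono[where T=7 and Q="scan_inv (Suc i)"])
        prefer 2 apply simp
       prefer 2 apply assumption
      apply (insert v a rbp b c Kn(1))
      apply (rule runs_to_step, (simp add: prog_exec_simps; fail)+,
      simp del: exec.simps add: prog_exec_simps, (simp only: pc_numeral_simps)?)+
      apply (rule runs_to_done)
       apply (simp add: mem_bounded_upd)
      apply (rule post)
      apply (auto simp: mem_bounded_upd)
      done
  next
    case True
    then have c: "0 < C + 1 - min_wt n K" by simp
    have odd: "odd (K mod (nI + 1))" using ng True by (simp add: admissible_def)
    have c2: "0 < (K - K div (nI + 1) * (nI + 1)) - (K - K div (nI + 1) * (nI + 1)) div 2 * 2"
      unfolding minus_div_mult_eq_mod using odd by (simp add: odd_iff_mod_2_eq_one)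
    show ?thesis
      apply (insert v a rbp b c c2 Kn(1))
      apply (rule runs_to_step, (simp add: prog_exec_simps; fail)+,
      simp del: exec.simps add: prog_exec_simps, (simp only: pc_numeral_simps)?)+
      apply (rule runs_to_done)
       apply (simp add: mem_bounded_upd)
      apply (rule post)
      apply (auto simp: mem_bounded_upd)
      done
  qed
qed

definition scan_done :: "(int \<Rightarrow> int) \<Rightarrow> bool" where
  "scan_done m \<longleftrightarrow> table_done m \<and> m (-28) = best_key"

lemma scan_exit:
  assumes I: "scan_inv (nat (key_max - best_key)) m"
  shows "prog_runs 88 m 12 103 scan_done"
proof -
  define K where "K = best_key"
  define rb where "rb = table_addr + nI * width"
  have KK: "key_max - int (nat (key_max - best_key)) = K" using best_key_props(3)
    by (simp add: K_def)
  have v: "m (-1) = 1" "m (-3) = C + 1" "m (-7) = nI + 1" "m (-15) = 2" "m (-25) = rb" "m (-28) = K"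
    "mem_bounded word_max m"
    using I KK unfolding scan_inv_def table_done_def consts_stored_def rb_def by auto
  have Kn: "0 \<le> K" "K < width" using best_key_props(2) best_key_lt_width by (auto simp: K_def)
  have Kle: "K \<le> key_max" using best_key_props(3) by (simp add: K_def)
  have gd: "admissible K" using best_key_props(1) by (simp add: K_def)
  have rbp: "0 < rb" unfolding rb_def using row_offset_nonneg[of n] table_addr_pos
    by (simp add: nI_def)
  have a: "m (rb + K) = min_wt n K" using I Kn unfolding scan_inv_def table_done_def rb_def
    by (auto simp: nI_def)
  note b = scan_fits[OF Kn(1) Kle, folded rb_def]
  have c: "0 < C + 1 - min_wt n K" using gd by (simp add: admissible_def)
  have c2: "\<not> 0 < (K - K div (nI + 1) * (nI + 1)) - (K - K div (nI + 1) * (nI + 1)) div 2 * 2"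
    unfolding minus_div_mult_eq_mod using gd by (simp add: admissible_def even_iff_mod_2_eq_zero)
  have post: "scan_done m'" if "mem_bounded word_max m'" "\<forall>a. 0 \<le> a \<longrightarrow> m' a = m a"
    "\<forall>a\<in>{-1,-15,-16,-30,-2,-3,-4,-5,-6,-7,-10,-11,-9,-25,-28}. m' a = m a" for m'
  proof -
    have "table_done m'" using table_done_frame I that unfolding scan_inv_def by auto
    then show ?thesis using that v unfolding scan_done_def K_def by auto
  qed
  show ?thesis
    apply (insert v a rbp b c c2 Kn(1))
    apply (rule runs_to_step, (simp add: prog_exec_simps; fail)+,
      simp del: exec.simps add: prog_exec_simps, (simp only: pc_numeral_simps)?)+
    apply (rule runs_to_done)
     apply (simp add: mem_bounded_upd)
    apply (rule post)
    apply (auto simp: mem_bounded_upd)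
    done
qed

lemma scan_phase:
  assumes I: "table_done m"
  shows "prog_runs 87 m (1 + 13 * nat (key_max - best_key) + 12) 103 scan_done"
proof -
  have e: "1 + 13 * nat (key_max - best_key) + 12 = (1 + (\<Sum>k\<in>{0..<nat (key_max - best_key)}. 13)) + 12"
    by simp
  show ?thesis unfolding e
  proof (rule runs_to_trans[OF runs_to_trans[OF scan_entry[OF I]]])
    fix m1 assume "scan_inv 0 m1"
    show "prog_runs 88 m1 (\<Sum>k\<in>{0..<nat (key_max - best_key)}. 13) 88 (scan_inv (nat (key_max - best_key)))"
      by (rule runs_to_loop[where I=scan_inv]) (use scan_step \<open>scan_inv 0 m1\<close> in \<open>auto simp: scan_inv_def table_done_def\<close>)
  next
    fix m2 assume "scan_inv (nat (key_max - best_key)) m2" then show "prog_runs 88 m2 12 103 scan_done"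
      by (rule scan_exit)
  qed
qed

definition backtrack_inv :: "nat \<Rightarrow> (int \<Rightarrow> int) \<Rightarrow> bool" where
  "backtrack_inv i m \<longleftrightarrow> m (-1) = 1 \<and> m (-30) = 0 \<and> m (-9) = width \<and> m (-10) = key_addr \<and> mem_bounded word_max m
    \<and> (\<forall>i<n. m (key_addr + int i) = item_key i)
    \<and> (\<forall>j'\<le>n. \<forall>K. 0 \<le> K \<longrightarrow> K < width \<longrightarrow> m (table_addr + int j' * width + K) = min_wt j' K)
    \<and> m (-8) = int (n - i) \<and> m (-25) = table_addr + int (n - i) * width
    \<and> 0 \<le> m (-28) \<and> m (-28) < width \<and> min_wt (n - i) (m (-28)) \<le> C \<and> sel \<inter> {..<n - i} = backtrack (n - i) (m (-28))
    \<and> (\<forall>a. int (n - i) \<le> a \<longrightarrow> a < nI \<longrightarrow> m a = (if nat a \<in> sel then 1 else 0))"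

lemma backtrack_inv_table: "backtrack_inv i m \<Longrightarrow> j \<le> n \<Longrightarrow> 0 \<le> K \<Longrightarrow> K < width \<Longrightarrow> m (table_addr + int j * width + K) = min_wt j K"
  unfolding backtrack_inv_def by blast

lemma backtrack_entry:
  assumes I: "scan_done m"
  shows "prog_runs 103 m 1 104 (backtrack_inv 0)"
proof -
  have v: "m (-2) = nI" "m (-30) = 0" "mem_bounded word_max m" using I
    unfolding scan_done_def table_done_def consts_stored_def by auto
  have b: "fits word_max nI" by (rule fits_if_size_le[OF size_le_nI]) auto
  have post: "backtrack_inv 0 m'" if "mem_bounded word_max m'" "\<forall>a. a \<noteq> -8 \<longrightarrow> m' a = m a"
    "m' (-8) = nI" for m'
  proof -
    have W: "min_wt n best_key \<le> C" using best_key_props(1) by (simp add: admissible_def)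
    have S: "sel \<inter> {..<n} = backtrack n best_key" using sel_props(1) by (auto simp: sel_def)
    have "\<forall>j'\<le>n. \<forall>K. 0 \<le> K \<longrightarrow> K < width \<longrightarrow> m' (table_addr + int j' * width + K) = min_wt j' K"
    proof (intro allI impI)
      fix j' K assume a: "j' \<le> n" "0 \<le> K" "K < width"
      have nn: "0 \<le> table_addr + int j' * width + K" using table_addr_pos row_offset_nonneg[of j'] a
        by linarith
      then show "m' (table_addr + int j' * width + K) = min_wt j' K" using I that(2) a
        unfolding scan_done_def table_done_def by auto
    qed
    moreover have "\<forall>i<n. m' (key_addr + int i) = item_key i" using I that(2) key_addr_pos
      unfolding scan_done_def table_done_def by auto
    ultimately show ?thesis using I that W S best_key_props(2) best_key_lt_width
      unfolding backtrack_inv_def scan_done_def table_done_def consts_stored_def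
      by (auto simp: nI_def)
  qed
  show ?thesis
    apply (insert v b)
    apply (rule runs_to_step, (simp add: prog_exec_simps; fail)+,
      simp del: exec.simps add: prog_exec_simps, (simp only: pc_numeral_simps)?)+
    apply (rule runs_to_done)
     apply (simp add: mem_bounded_upd)
    apply (rule post)
    apply (auto simp: mem_bounded_upd)
    done
qed

lemma backtrack_step_fits:
  assumes jn: "j < n" and K: "0 \<le> K" "K < width"
  shows "fits word_max (table_addr + int (Suc j) * width + K)" "fits word_max (min_wt (Suc j) K)"
    "fits word_max (table_addr + int (Suc j) * width - width)"
    "fits word_max (table_addr + int (Suc j) * width - width + K)" "fits word_max (min_wt j K)"
    "fits word_max (min_wt j K - min_wt (Suc j) K)" "fits word_max (int j + 1 - 1)"
      "fits word_max 1" "fits word_max 0"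
    "fits word_max (key_addr + (int j + 1 - 1))" "fits word_max (item_key j)"
      "fits word_max (K - item_key j)"
proof -
  have bK: "size_le 10 K" using size_le_width K unfolding size_le_def by simp
  have ra: "size_le 12 (table_addr + int (Suc j) * width)"
    using size_le_rowaddr[of "Suc j"] jn
      by (intro size_le_add'[OF size_le_mono[OF size_le_table_addr]]) auto
  show "fits word_max (table_addr + int (Suc j) * width + K)"
    by (rule fits_if_size_le[OF size_le_add'[OF ra size_le_mono[OF bK]]]) auto
  show "fits word_max (min_wt (Suc j) K)"
    by (rule fits_if_size_le[OF size_le_min_wt]) (use jn in auto)
  have rl: "size_le 13 (table_addr + int (Suc j) * width - width)"
    by (rule size_le_sub'[OF ra size_le_mono[OF size_le_width]]) auto
  show "fits word_max (table_addr + int (Suc j) * width - width)"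
    by (rule fits_if_size_le[OF rl]) auto
  show "fits word_max (table_addr + int (Suc j) * width - width + K)"
    by (rule fits_if_size_le[OF size_le_add'[OF rl size_le_mono[OF bK]]]) auto
  show "fits word_max (min_wt j K)" by (rule fits_if_size_le[OF size_le_min_wt]) (use jn in auto)
  show "fits word_max (min_wt j K - min_wt (Suc j) K)"
    by (rule fits_if_size_le[OF size_le_sub'[OF size_le_min_wt size_le_min_wt]]) (use jn in auto)
  show "fits word_max (int j + 1 - 1)" using fits_if_size_le[OF size_le_j[of j]] jn by simp
  show "fits word_max 1" "fits word_max 0"
    using fits_if_size_le[OF size_le_1] fits_if_size_le[OF size_le_0] by auto
  show "fits word_max (key_addr + (int j + 1 - 1))"
    using fits_if_size_le[OF size_le_add'[OF size_le_key_addr size_le_mono[OF size_le_j[of j]]], of 4] jn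
    by simp
  show "fits word_max (item_key j)" by (rule fits_if_size_le[OF size_le_item_key[OF jn]]) auto
  show "fits word_max (K - item_key j)"
    by (rule fits_if_size_le[OF size_le_sub'[OF bK size_le_mono[OF size_le_item_key[OF jn]]]]) auto
qed

lemma backtrack_inv_Suc:
  assumes I: "backtrack_inv i m" and i: "Suc j' + i = n"
    and upd: "mem_bounded word_max m'" "\<forall>a. a \<noteq> int j' \<longrightarrow> 0 \<le> a \<longrightarrow> m' a = m a"
    "\<forall>a\<in>{-1,-30,-9,-10}. m' a = m a" "m' (-8) = int j'" "m' (-25) = table_addr + int j' * width"
    "0 \<le> m' (-28)" "m' (-28) < width" "min_wt j' (m' (-28)) \<le> C"
      "sel \<inter> {..<j'} = backtrack j' (m' (-28))"
    "m' (int j') = (if j' \<in> sel then 1 else 0)"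
  shows "backtrack_inv (Suc i) m'"
proof -
  have jj: "n - i = Suc j'" and nj: "n - Suc i = j'" using i by auto
  have jA: "int j' < key_addr" using i by (simp add: key_addr_def nI_def)
  have "\<forall>j'\<le>n. \<forall>K. 0 \<le> K \<longrightarrow> K < width \<longrightarrow> m' (table_addr + int j' * width + K) = min_wt j' K"
  proof (intro allI impI)
    fix j'' K assume a: "j'' \<le> n" "0 \<le> K" "K < width"
    have nn: "0 \<le> table_addr + int j'' * width + K" using table_addr_pos row_offset_nonneg[of j''] a
      by linarith
    have ne: "table_addr + int j'' * width + K \<noteq> int j'"
      using nn jA table_addr_eq nI_pos row_offset_nonneg[of j''] a by linarith
    show "m' (table_addr + int j'' * width + K) = min_wt j'' K" using I upd(2) a nn ne
      unfolding backtrack_inv_def by auto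
  qed
  moreover have "\<forall>i<n. m' (key_addr + int i) = item_key i"
  proof (intro allI impI)
    fix i' assume "i' < n"
    moreover have "key_addr + int i' \<noteq> int j'" using jA by linarith
    ultimately show "m' (key_addr + int i') = item_key i'" using I upd(2) key_addr_pos
      unfolding backtrack_inv_def by auto
  qed
  moreover have "\<forall>a. int j' \<le> a \<longrightarrow> a < nI \<longrightarrow> m' a = (if nat a \<in> sel then 1 else 0)"
  proof (intro allI impI)
    fix a assume a: "int j' \<le> a" "a < nI"
    show "m' a = (if nat a \<in> sel then 1 else 0)"
    proof (cases "a = int j'")
      case True then show ?thesis using upd(10) by simp
    next
      case False
      then have "int (n - i) \<le> a" using a jj by simp
      then show ?thesis using I upd(2) a False unfolding backtrack_inv_def by auto
    qed
  qed
  ultimately show ?thesis using I upd unfolding backtrack_inv_def nj by auto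
qed

lemma backtrack_step:
  assumes i: "i < n" and I: "backtrack_inv i m"
  shows "prog_runs 104 m 14 104 (backtrack_inv (Suc i))"
proof -
  define j' where "j' = n - Suc i"
  have jj: "n - i = Suc j'" and ji: "Suc j' + i = n" using i by (simp_all add: j'_def)
  define K where "K = m (-28)"
  define rb where "rb = table_addr + int (Suc j') * width"
  have v: "m (-1) = 1" "m (-30) = 0" "m (-9) = width" "m (-10) = key_addr" "m (-8) = int j' + 1"
    "m (-25) = rb" "m (-28) = K" "mem_bounded word_max m"
    using I jj unfolding backtrack_inv_def K_def rb_def by auto
  have j'n: "j' < n" using i by (simp add: j'_def)
  have Kn: "0 \<le> K" "K < width"
    "min_wt (Suc j') K \<le> C" and S: "sel \<inter> {..<Suc j'} = backtrack (Suc j') K"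
    using I jj unfolding backtrack_inv_def K_def by auto
  have rbL: "rb - width = table_addr + int j' * width" by (simp add: rb_def algebra_simps)
  have rbp: "0 < rb - width" using rbL table_addr_pos row_offset_nonneg[of j'] by linarith
  have Lp: "0 < width" using width_pos by simp
  have a1: "m (rb + K) = min_wt (Suc j') K" unfolding rb_def
    by (rule backtrack_inv_table[OF I]) (use Kn j'n in auto)
  have a2: "m (rb - width + K) = min_wt j' K" unfolding rbL
    by (rule backtrack_inv_table[OF I]) (use Kn j'n in auto)
  have a3: "m (key_addr + (int j' + 1 - 1)) = item_key j'" using I j'n unfolding backtrack_inv_def
    by auto
  have Ap: "0 < key_addr" by (rule key_addr_pos)
  have jA: "int j' < key_addr" using j'n by (simp add: key_addr_def nI_def)
  note b = backtrack_step_fits[OF j'n Kn(1,2), folded rb_def]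
  have post: "backtrack_inv (Suc i) m'" if "mem_bounded word_max m'"
    "\<forall>a. a \<noteq> int j' \<longrightarrow> 0 \<le> a \<longrightarrow> m' a = m a"
    "\<forall>a\<in>{-1,-30,-9,-10}. m' a = m a" "m' (-8) = int j'" "m' (-25) = rb - width"
    "0 \<le> m' (-28)" "m' (-28) < width" "min_wt j' (m' (-28)) \<le> C"
      "sel \<inter> {..<j'} = backtrack j' (m' (-28))"
    "m' (int j') = (if j' \<in> sel then 1 else 0)" for m'
    using backtrack_inv_Suc[OF I ji that[unfolded rbL]] .
  note sel_step = backtrack_Suc_prefix[OF S]
  show ?thesis
  proof (cases "min_wt (Suc j') K < min_wt j' K")
    case True
    have c: "0 < min_wt j' K - min_wt (Suc j') K" using True by simp
    have dK: "item_key j' \<le> K" and eq: "min_wt (Suc j') K = min_wt j' (K - item_key j') + ws ! j'"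
      using True by (auto split: if_splits simp: min_def)
    have wj: "0 \<le> ws ! j'" using w_nn j'n by simp
    have in1: "j' \<in> sel" and S2: "sel \<inter> {..<j'} = backtrack j' (K - item_key j')"
      using sel_step True by simp_all
    have W2: "min_wt j' (K - item_key j') \<le> C" using eq Kn(3) wj by linarith
    have K2: "0 \<le> K - item_key j'" "K - item_key j' < width" using dK Kn item_key_nonneg[of j']
      by auto
    have c': "min_wt j' (K - item_key j') + ws ! j' < min_wt j' K" using True eq by simp
    show ?thesis
      apply (insert v a1 a2 a3 rbp Ap jA b c' in1 S2 W2 K2 Lp Kn(1) dK)
      apply (rule runs_to_step, (simp add: prog_exec_simps; fail)+,
      simp del: exec.simps add: prog_exec_simps, (simp only: pc_numeral_simps)?)+
      apply (rule runs_to_done)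
       apply (simp add: mem_bounded_upd)
      apply (rule post)
      apply (auto simp: mem_bounded_upd)
      done
  next
    case False
    have c: "\<not> 0 < min_wt j' K - min_wt (Suc j') K" using False by simp
    have in1: "j' \<notin> sel" and S2: "sel \<inter> {..<j'} = backtrack j' K"
      using sel_step False by simp_all
    have W2: "min_wt j' K \<le> C" using False Kn(3) by simp
    have eqF: "min_wt (Suc j') K = min_wt j' K" using False min_wt_Suc_le[of j' K] by linarith
    have a1f: "m (rb + K) = min_wt j' K" using a1 eqF by simp
    show ?thesis
      apply (rule runs_to_mono[where T=11 and Q="backtrack_inv (Suc i)"])
        prefer 2 apply simp
       prefer 2 apply assumption
      apply (insert v a1f a2 a3 rbp Ap jA b in1 S2 W2 Kn Lp)
      apply (rule runs_to_step, (simp add: prog_exec_simps; fail)+,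
      simp del: exec.simps add: prog_exec_simps, (simp only: pc_numeral_simps)?)+
      apply (rule runs_to_done)
       apply (simp add: mem_bounded_upd)
      apply (rule post)
      apply (auto simp: mem_bounded_upd)
      done
  qed
qed

definition output_written :: "(int \<Rightarrow> int) \<Rightarrow> bool" where
  "output_written m \<longleftrightarrow> mem_bounded word_max m \<and> (\<forall>a. 0 \<le> a \<longrightarrow> a < nI \<longrightarrow> m a = (if nat a \<in> sel then 1 else 0))"

lemma backtrack_exit:
  assumes I: "backtrack_inv n m"
  shows "prog_runs 104 m 2 121 output_written"
proof -
  have v: "m (-8) = 0" "mem_bounded word_max m" using I unfolding backtrack_inv_def by auto
  show ?thesis
    apply (insert v)
    apply (rule runs_to_step, (simp add: prog_exec_simps; fail)+,
      simp del: exec.simps add: prog_exec_simps, (simp only: pc_numeral_simps)?)+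
    apply (rule runs_to_done)
     apply (simp add: mem_bounded_upd)
    using I apply (auto simp: output_written_def backtrack_inv_def)
    done
qed

lemma backtrack_phase:
  assumes I: "scan_done m"
  shows "prog_runs 103 m (1 + 14 * n + 2) 121 output_written"
proof -
  have e: "1 + 14 * n + 2 = (1 + (\<Sum>k\<in>{0..<n}. 14)) + 2" by simp
  show ?thesis unfolding e
  proof (rule runs_to_trans[OF runs_to_trans[OF backtrack_entry[OF I]]])
    fix m1 assume "backtrack_inv 0 m1"
    show "prog_runs 104 m1 (\<Sum>k\<in>{0..<n}. 14) 104 (backtrack_inv n)"
      by (rule runs_to_loop[where I=backtrack_inv]) (use backtrack_step \<open>backtrack_inv 0 m1\<close> in \<open>auto simp: backtrack_inv_def\<close>)
  next
    fix m2 assume "backtrack_inv n m2" then show "prog_runs 104 m2 2 121 output_written"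
      by (rule backtrack_exit)
  qed
qed

definition "time_total = 15 + (time_levels + 3) + (2 + 6 * nat key_max + 3) + (2 + n * (13 + 18 * nat width) + 3)
   + (1 + 13 * nat (key_max - best_key) + 12) + (1 + 14 * n + 2)"

lemma prog_runs_to_halt: "prog_runs 0 mem0 time_total 121 output_written"
  unfolding time_total_def
  apply (rule runs_to_trans[OF runs_to_trans[OF runs_to_trans[OF runs_to_trans[OF runs_to_trans[OF setup_phase]]]]])
  apply (erule levels_phase)
  apply (erule row0_phase)
  apply (erule table_phase)
  apply (erule scan_phase)
  apply (erule backtrack_phase)
  done

lemma prog_run: "\<exists>t. t \<le> time_total \<and> halted (prog M) (run (prog M) t (init ws ps C))
   \<and> (\<forall>t'\<le>t. mem_bounded word_max (snd (run (prog M) t' (init ws ps C))))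
   \<and> ram_output n (run (prog M) t (init ws ps C)) = sel"
proof -
  obtain m' where r: "reaches_within (prog M) word_max (0, mem0) time_total (121, m')" and F: "output_written m'"
    using prog_runs_to_halt unfolding runs_to_def by blast
  obtain t where t: "t \<le> time_total" "run (prog M) t (0, mem0) = (121, m')"
    "\<forall>t'\<le>t. mem_bounded word_max (snd (run (prog M) t' (0, mem0)))"
    using r unfolding reaches_within_def by blast
  have h: "halted (prog M) (121, m')" unfolding halted_def by (simp add: prog_nth)
  have o: "ram_output n (121, m') = sel"
  proof -
    have "\<And>j. j < n \<Longrightarrow> m' (int j) \<noteq> 0 \<longleftrightarrow> j \<in> sel" using F unfolding output_written_def
      by (auto simp: nI_def)
    moreover have "sel \<subseteq> {..<n}" by (rule sel_props(1))
    ultimately show ?thesis unfolding ram_output_def by auto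
  qed
  show ?thesis using t h o unfolding init_eq by auto
qed

definition "log_pmax = max 1 (log 2 (real_of_int (pmax ps)))"

lemma one_le_log_pmax: "1 \<le> log_pmax"
  by (simp add: log_pmax_def)

lemma one_le_M_log_pmax: "1 \<le> real_of_int M * log_pmax"
  using mult_mono[of 1 "real_of_int M" 1 log_pmax] M1 one_le_log_pmax by simp

lemma level_le_log_pmax:
  assumes "j < n"
  shows "real (level (ps ! j)) \<le> 3 * real_of_int mu * log_pmax"
proof -
  have p: "ps ! j \<noteq> 0" using p_nz[OF assms] .
  have "log 2 (real_of_int \<bar>ps ! j\<bar>) \<le> log 2 (real_of_int (pmax ps))"
    using p abs_le_pmax[OF assms] by (intro log_mono) auto
  also have "\<dots> \<le> log_pmax" by (simp add: log_pmax_def)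
  finally have "2 + log 2 (real_of_int \<bar>ps ! j\<bar>) \<le> 3 * log_pmax" using one_le_log_pmax by linarith
  then have "real_of_int mu * (2 + log 2 (real_of_int \<bar>ps ! j\<bar>)) \<le> real_of_int mu * (3 * log_pmax)"
    using mu_ge3 by (intro mult_left_mono) auto
  then show ?thesis using level_le_log[OF p] by simp
qed

lemma sum_level_le: "(\<Sum>j<n. real (level (ps ! j))) \<le> 9 * real n ^ 2 * (real_of_int M * log_pmax)"
proof -
  have "(\<Sum>j<n. real (level (ps ! j))) \<le> (\<Sum>j<n. 3 * real_of_int mu * log_pmax)"
    using level_le_log_pmax by (intro sum_mono) auto
  also have "\<dots> = 9 * real n ^ 2 * (real_of_int M * log_pmax)"
    by (simp add: mu_def nI_def power2_eq_square)
  finally show ?thesis .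
qed

lemma key_max_le: "real_of_int key_max \<le> 21 * real n ^ 3 * (real_of_int M * log_pmax)"
proof -
  define x c V where "x = real n" and "c = real_of_int M * log_pmax" and "V = (\<Sum>j<n. real (level (ps ! j)))"
  have x1: "1 \<le> x" and c1: "1 \<le> c" using n_pos one_le_M_log_pmax by (simp_all add: x_def c_def)
  have V: "0 \<le> V" "V \<le> 9 * x ^ 2 * c" using sum_level_le
    by (simp_all add: V_def x_def c_def sum_nonneg)
  have "real_of_int key_max = (\<Sum>j<n. real_of_int (item_key j))" by (simp add: key_max_def)
  also have "\<dots> \<le> (\<Sum>j<n. (x + 1) * (real (level (ps ! j)) + 1) + 1)"
    by (intro sum_mono) (auto simp: item_key_def neg_def x_def nI_def)
  also have "\<dots> = (x + 1) * (V + x) + x"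
    by (simp add: sum.distrib sum_distrib_left V_def x_def algebra_simps)
  also have "\<dots> \<le> (2 * x) * (9 * x ^ 2 * c + x) + x"
    using x1 V by (intro add_right_mono mult_mono) auto
  also have "\<dots> \<le> 21 * x ^ 3 * c"
  proof -
    have "x ^ 1 \<le> x ^ 3" "x ^ 2 \<le> x ^ 3" by (rule power_increasing, simp, rule x1)+
    then have "x \<le> x ^ 3" "x ^ 2 \<le> x ^ 3" by simp_all
    moreover have "x ^ 3 \<le> x ^ 3 * c" using c1 x1 by simp
    ultimately show ?thesis by (simp add: algebra_simps power2_eq_square power3_eq_cube)
  qed
  finally show ?thesis by (simp add: x_def c_def)
qed

lemma time_total_le: "real time_total \<le> 953 * real n ^ 4 * (real_of_int M * log_pmax)"
proof -
  define x Q where "x = real n" and "Q = real n ^ 3 * (real_of_int M * log_pmax)"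
  have x1: "1 \<le> x" using n_pos by (simp add: x_def)
  have Q: "1 \<le> Q" "x \<le> Q"
  proof -
    have "x ^ 1 \<le> x ^ 3" by (rule power_increasing, simp, rule x1)
    then have "x \<le> x ^ 3" by simp
    moreover have "x ^ 3 \<le> Q" unfolding Q_def x_def[symmetric] using one_le_M_log_pmax x1 by simp
    ultimately show "1 \<le> Q" "x \<le> Q" using x1 by linarith+
  qed
  have V: "(\<Sum>j<n. real (level (ps ! j))) \<le> 9 * Q"
  proof -
    have "x ^ 2 \<le> x ^ 3" by (rule power_increasing, simp, rule x1)
    then have "x ^ 2 * (real_of_int M * log_pmax) \<le> x ^ 3 * (real_of_int M * log_pmax)"
      using one_le_M_log_pmax by (intro mult_right_mono) auto
    then show ?thesis using sum_level_le unfolding Q_def x_def by linarith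
  qed
  have K: "0 \<le> real_of_int key_max" "real_of_int key_max \<le> 21 * Q"
    using key_max_nonneg key_max_le by (simp_all add: Q_def mult.assoc)
  have "real time_total = 44 + real time_levels + 6 * real (nat key_max)
      + x * (13 + 18 * real (nat width)) + 13 * real (nat (key_max - best_key)) + 14 * x"
    by (simp add: time_total_def x_def)
  also have "\<dots> \<le> 44 + 69 * x + 7 * (\<Sum>j<n. real (level (ps ! j)))
      + 19 * real_of_int key_max + 18 * (x * real_of_int key_max)"
    using K best_key_props(2,3)
    by (simp add: time_levels_def width_def x_def sum.distrib sum_distrib_left of_nat_sum algebra_simps)
  also have "\<dots> \<le> 575 * Q + 378 * (x * Q)"
    using Q V K mult_left_mono[OF K(2), of x] x1 by linarith
  also have "\<dots> \<le> 953 * (x * Q)" using Q x1 mult_right_mono[of 1 x Q] by linarith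
  finally show ?thesis by (simp add: Q_def x_def power_numeral_reduce algebra_simps)
qed

lemma time_bound_le_inverse_eps:
  assumes "0 < eps" "real_of_int M \<le> 2 / eps"
  shows "953 * real n ^ 4 * (real_of_int M * log_pmax) \<le> 2000 * (real n ^ 4 / eps) * log_pmax"
proof -
  have "real_of_int M * log_pmax \<le> 2 / eps * log_pmax"
    using assms(2) one_le_log_pmax by (intro mult_right_mono) auto
  then have "953 * real n ^ 4 * (real_of_int M * log_pmax) \<le> 953 * real n ^ 4 * (2 / eps * log_pmax)"
    by (intro mult_left_mono) auto
  also have "\<dots> = 1906 * (real n ^ 4 / eps * log_pmax)" by simp
  also have "\<dots> \<le> 2000 * (real n ^ 4 / eps * log_pmax)"
    using assms(1) one_le_log_pmax by (intro mult_right_mono) auto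
  finally show ?thesis by (simp add: mult.assoc)
qed

theorem prog_correct:
  "\<exists>t. real t \<le> 953 * real n ^ 4 * (real_of_int M * log_pmax)
     \<and> halted (prog M) (run (prog M) t (init ws ps C))
     \<and> (\<forall>t'\<le>t. mem_bounded word_max (snd (run (prog M) t' (init ws ps C))))
     \<and> feasible ws C (ram_output n (run (prog M) t (init ws ps C)))
     \<and> (1 - 1 / real_of_int M) * opt ws ps C \<le> obj ps (ram_output n (run (prog M) t (init ws ps C)))"
proof -
  obtain t where t: "t \<le> time_total" "halted (prog M) (run (prog M) t (init ws ps C))"
    "\<forall>t'\<le>t. mem_bounded word_max (snd (run (prog M) t' (init ws ps C)))"
    "ram_output n (run (prog M) t (init ws ps C)) = sel"
    using prog_run by blast
  have "real t \<le> 953 * real n ^ 4 * (real_of_int M * log_pmax)"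
    using t(1) time_total_le by (meson of_nat_le_iff order_trans)
  then show ?thesis using t feasible_sel sel_approx by (intro exI[of _ t]) auto
qed

end

lemma ceiling_inverse_bounds:
  assumes "0 < eps" "eps < 1"
  shows "1 \<le> \<lceil>1 / eps\<rceil>" "1 / real_of_int \<lceil>1 / eps\<rceil> \<le> eps" "real_of_int \<lceil>1 / eps\<rceil> \<le> 2 / eps"
proof -
  have "1 < 1 / eps" using assms by (simp add: field_simps)
  moreover have "1 / eps \<le> real_of_int \<lceil>1 / eps\<rceil>" by (rule le_of_int_ceiling)
  ultimately show "1 \<le> \<lceil>1 / eps\<rceil>" by linarith
  have "1 \<le> eps * real_of_int \<lceil>1 / eps\<rceil>"
    using mult_left_mono[OF \<open>1 / eps \<le> _\<close>, of eps] assms by simp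
  then show "1 / real_of_int \<lceil>1 / eps\<rceil> \<le> eps"
    using \<open>1 \<le> \<lceil>1 / eps\<rceil>\<close> by (simp add: divide_le_eq mult.commute)
  have "real_of_int \<lceil>1 / eps\<rceil> \<le> 1 / eps + 1" by (rule of_int_ceiling_le_add_one)
  then show "real_of_int \<lceil>1 / eps\<rceil> \<le> 2 / eps" using \<open>1 < 1 / eps\<close> by (simp add: field_simps)
qed

lemma approx_alg_within_prog:
  assumes eps: "0 < eps" "eps < 1"
  defines "M \<equiv> \<lceil>1 / eps\<rceil>"
  shows "approx_alg_within 20 eps
    (\<lambda>ws ps C. 2000 * (real (length ws) ^ 4 / eps) * max 1 (log 2 (real_of_int (pmax ps))))
    (prog M)"
  unfolding approx_alg_within_def Let_def
proof (intro allI impI)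
  fix ws ps C assume "pkp_instance ws ps C"
  note M = ceiling_inverse_bounds[OF eps, folded M_def]
  interpret pkp ws ps C M using \<open>pkp_instance ws ps C\<close> M(1) by unfold_locales
  obtain t where t: "real t \<le> 953 * real n ^ 4 * (real_of_int M * log_pmax)"
    "halted (prog M) (run (prog M) t (init ws ps C))"
    "\<forall>t'\<le>t. mem_bounded word_max (snd (run (prog M) t' (init ws ps C)))"
    "feasible ws C (ram_output n (run (prog M) t (init ws ps C)))"
    "(1 - 1 / real_of_int M) * opt ws ps C \<le> obj ps (ram_output n (run (prog M) t (init ws ps C)))"
    using prog_correct by blast
  have time: "real t \<le> 2000 * (real n ^ 4 / eps) * log_pmax"
    using t(1) time_bound_le_inverse_eps[OF eps(1) M(3)] by linarith
  have "word_bounded 20 eps ws ps C (prog M) t"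
    unfolding word_bounded_def
  proof (intro allI impI)
    fix t' a assume "t' \<le> t"
    then have "\<bar>snd (run (prog M) t' (init ws ps C)) a\<bar> \<le> word_max"
      using t(3) by (simp add: mem_bounded_def)
    then show "\<bar>snd (run (prog M) t' (init ws ps C)) a\<bar> \<le> (2 + int n + C + pmax ps + \<lceil>1 / eps\<rceil>) ^ 20"
      unfolding word_max_def N0_def nI_def by (simp add: M_def)
  qed
  moreover have "(1 - eps) * opt ws ps C \<le> (1 - 1 / real_of_int M) * opt ws ps C"
    using M(2) one_le_opt[OF inst] by (intro mult_right_mono) auto
  ultimately show "\<exists>t. real t \<le> 2000 * (real n ^ 4 / eps) * max 1 (log 2 (real_of_int (pmax ps)))
      \<and> halted (prog M) (run (prog M) t (init ws ps C)) \<and> word_bounded 20 eps ws ps C (prog M) t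
      \<and> feasible ws C (ram_output n (run (prog M) t (init ws ps C)))
      \<and> (1 - eps) * opt ws ps C \<le> obj ps (ram_output n (run (prog M) t (init ws ps C)))"
    using time t unfolding log_pmax_def by (intro exI[of _ t]) auto
qed

theorem theorem2:
  shows "\<exists>(c::real) (K::nat). c > 0 \<and>
    (\<forall>eps::real. 0 < eps \<and> eps < 1 \<longrightarrow>
       (\<exists>P. approx_alg_within K eps
              (\<lambda>ws ps C. c * (real (length ws) ^ 4 / eps) * max 1 (log 2 (real_of_int (pmax ps))))
              P))"
proof (intro exI[of _ "2000::real"] exI[of _ "20::nat"] conjI allI impI)
  fix eps :: real assume "0 < eps \<and> eps < 1"
  then show "\<exists>P. approx_alg_within 20 eps
      (\<lambda>ws ps C. 2000 * (real (length ws) ^ 4 / eps) * max 1 (log 2 (real_of_int (pmax ps)))) P"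
    using approx_alg_within_prog by blast
qed simp

end
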